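(* Let $k\ge1$, $a,a_i,b_i,c_i\in\mathbb{C}$ ($1\le i\le k$) with $\prod_{j=1}^kc_j\neq0$ and $\prod_{j=1}^kb_j\neq0$, let $f$ be the symbol below and $T^a(f)=T(f)+a\,\mathbf{e}_1\mathbf{e}_1^{\top}$ the perturbed tridiagonal $k$-Toeplitz operator, and let $\lambda\in\mathbb{C}\setminus\sigma_{ess}(T^a(f))$. If $\sum_{j=1}^k\operatorname{wind}(\lambda_j(\mathbb{T}),\lambda)<0$, then there exist an eigenvector $\mathbf{x}$ of $T^a(f)$ associated to $\lambda$ and some $\rho<1$ such that $$\frac{|\mathbf{x}_j|}{\max_i|\mathbf{x}_i|}\le C\lceil j/k\rceil\rho^{\lceil j/k\rceil-1},\qquad j\ge1,$$ where $C>0$ depends only on $\lambda,a_j,b_j,c_j$, $j=1,\dots,k$. If $\sum_{j=1}^k\operatorname{wind}(\lambda_j(\mathbb{T}),\lambda)>0$, the same conclusion holds for left eigenvectors of $T^a(f)$ associated to $\lambda$.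
   Context: The tridiagonal $k$-Toeplitz operator $T(f)$ on $\ell^2(\mathbb{N})$ has matrix entries $(i,i)=a_{p(i)}$, $(i,i+1)=b_{p(i)}$, $(i+1,i)=c_{p(i)}$, $p(i)=((i-1)\bmod k)+1$, all other entries zero; $T^a(f)$ is the same operator with $(1,1)$ entry replaced by $a_1+a$. The symbol is $f(z)=A_{-1}z^{-1}+A_0+A_1z$, where $A_0$ is the $k\times k$ tridiagonal matrix with diagonal $a_1,\dots,a_k$, superdiagonal $b_1,\dots,b_{k-1}$, subdiagonal $c_1,\dots,c_{k-1}$; $A_{-1}$ has single nonzero entry $b_k$ at $(k,1)$; $A_1$ has single nonzero entry $c_k$ at $(1,k)$. $\mathbb{T}$ is the unit circle; $\sigma_{ess}$ denotes the essential spectrum (set of $\lambda$ with operator minus $\lambda$ not Fredholm). With $\lambda_1(z),\dots,\lambda_k(z)$ the eigenvalues of $f(z)$, $\sum_j\operatorname{wind}(\lambda_j(\mathbb{T}),\lambda)$ is the winding number about $0$ of $z\mapsto\det(f(z)-\lambda I)$ as $z$ traverses $\mathbb{T}$ counterclockwise. A left eigenvector is a nonzero $\mathbf{y}$ with $\mathbf{y}^\top T^a(f)=\lambda\mathbf{y}^\top$. *)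

theory Defs
  imports "HOL-Complex_Analysis.Complex_Analysis" "Jordan_Normal_Form.Determinant"
begin

text \<open>Vectors of l^2(N) are represented as functions nat => complex, stored 0-based:
  component i (i >= 0) here is the paper's component i+1.
  Coefficient sequences a, b, c are indexed 1..k as in the paper.\<close>

definition l2 :: "(nat \<Rightarrow> complex) \<Rightarrow> bool" where
  "l2 x \<longleftrightarrow> summable (\<lambda>i. (cmod (x i))\<^sup>2)"

definition l2norm :: "(nat \<Rightarrow> complex) \<Rightarrow> real" where
  "l2norm x = sqrt (\<Sum>i. (cmod (x i))\<^sup>2)"

text \<open>Period index: paper's p(i) = ((i-1) mod k)+1; for 0-based row r this is (r mod k)+1.\<close>
definition per :: "nat \<Rightarrow> nat \<Rightarrow> nat" where
  "per k r = r mod k + 1"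

definition Tpert :: "nat \<Rightarrow> complex \<Rightarrow> (nat \<Rightarrow> complex) \<Rightarrow> (nat \<Rightarrow> complex) \<Rightarrow> (nat \<Rightarrow> complex)
    \<Rightarrow> (nat \<Rightarrow> complex) \<Rightarrow> (nat \<Rightarrow> complex)" where
  "Tpert k a as bs cs x = (\<lambda>r.
     (as (per k r) + (if r = 0 then a else 0)) * x r
     + bs (per k r) * x (Suc r)
     + (if r = 0 then 0 else cs (per k (r - 1)) * x (r - 1)))"

definition Tpert_tr :: "nat \<Rightarrow> complex \<Rightarrow> (nat \<Rightarrow> complex) \<Rightarrow> (nat \<Rightarrow> complex) \<Rightarrow> (nat \<Rightarrow> complex)
    \<Rightarrow> (nat \<Rightarrow> complex) \<Rightarrow> (nat \<Rightarrow> complex)" where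
  "Tpert_tr k a as bs cs y = (\<lambda>r.
     (as (per k r) + (if r = 0 then a else 0)) * y r
     + cs (per k r) * y (Suc r)
     + (if r = 0 then 0 else bs (per k (r - 1)) * y (r - 1)))"

definition lincomb :: "complex list \<Rightarrow> (nat \<Rightarrow> complex) list \<Rightarrow> (nat \<Rightarrow> complex)" where
  "lincomb cs vs = (\<lambda>i. \<Sum>j<length vs. cs ! j * (vs ! j) i)"

definition fredholm_l2 :: "((nat \<Rightarrow> complex) \<Rightarrow> (nat \<Rightarrow> complex)) \<Rightarrow> bool" where
  "fredholm_l2 L \<longleftrightarrow>
     (\<exists>vs. (\<forall>v\<in>set vs. l2 v) \<and>
        (\<forall>x. l2 x \<and> L x = (\<lambda>_. 0) \<longrightarrow> (\<exists>cs. length cs = length vs \<and> x = lincomb cs vs)))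
   \<and> (\<forall>xs y. (\<forall>n. l2 (xs n)) \<and> l2 y \<and> (\<lambda>n. l2norm (\<lambda>i. L (xs n) i - y i)) \<longlonglongrightarrow> 0
         \<longrightarrow> (\<exists>x. l2 x \<and> L x = y))
   \<and> (\<exists>ws. (\<forall>w\<in>set ws. l2 w) \<and>
        (\<forall>y. l2 y \<longrightarrow> (\<exists>x cs. l2 x \<and> length cs = length ws \<and> y = (\<lambda>i. L x i + lincomb cs ws i))))"

definition ess_spec :: "((nat \<Rightarrow> complex) \<Rightarrow> (nat \<Rightarrow> complex)) \<Rightarrow> complex set" where
  "ess_spec L = {\<mu>. \<not> fredholm_l2 (\<lambda>x i. L x i - \<mu> * x i)}"

definition symbol :: "nat \<Rightarrow> (nat \<Rightarrow> complex) \<Rightarrow> (nat \<Rightarrow> complex) \<Rightarrow> (nat \<Rightarrow> complex)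
    \<Rightarrow> complex \<Rightarrow> complex mat" where
  "symbol k as bs cs z =
     (1 / z) \<cdot>\<^sub>m mat k k (\<lambda>(i,j). if i = k - 1 \<and> j = 0 then bs k else 0)
     + mat k k (\<lambda>(i,j). (if i = j then as (i+1) else 0)
                      + (if j = i + 1 then bs (i+1) else 0)
                      + (if i = j + 1 then cs (j+1) else 0))
     + z \<cdot>\<^sub>m mat k k (\<lambda>(i,j). if i = 0 \<and> j = k - 1 then cs k else 0)"

text \<open>Sum of winding numbers of the eigenvalue curves about lambda = winding number about 0
  of z \<mapsto> det(f(z) - lambda I), z traversing the unit circle counterclockwise.\<close>
definition total_wind :: "nat \<Rightarrow> (nat \<Rightarrow> complex) \<Rightarrow> (nat \<Rightarrow> complex) \<Rightarrow> (nat \<Rightarrow> complex)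
    \<Rightarrow> complex \<Rightarrow> complex" where
  "total_wind k as bs cs \<mu> =
     winding_number
       (\<lambda>t. det (symbol k as bs cs (exp (2 * of_real pi * \<i> * of_real t)) - \<mu> \<cdot>\<^sub>m 1\<^sub>m k)) 0"

text \<open>Eigenvector decay bound (paper's 1-based index j corresponds to x (j-1)).\<close>
definition decay_bound :: "nat \<Rightarrow> real \<Rightarrow> real \<Rightarrow> (nat \<Rightarrow> complex) \<Rightarrow> bool" where
  "decay_bound k C \<rho> x \<longleftrightarrow>
     (\<forall>j\<ge>1. cmod (x (j - 1)) / (SUP i. cmod (x i))
        \<le> C * of_int \<lceil>real j / real k\<rceil> * \<rho> ^ (nat \<lceil>real j / real k\<rceil> - 1))"

end

(* The determinant of f(z) - \<mu> is a Laurent polynomial A/z + B + C z, so its winding number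
   along the unit circle is the number of its zeros in the unit disc minus one; a negative winding
   number puts every zero outside the closed disc.

   A vector x satisfying rows r >= 1 of (T(f) - \<mu>) x = 0 is determined by (x 0, x 1) through a
   2 x 2 transfer recurrence, and an eigenvalue r of its monodromy over one period gives a Bloch
   solution x (i + k) = r x i, i.e. a zero 1/r of the determinant. Hence both monodromy eigenvalues
   lie inside the disc, every such x decays like (m + 1) \<rho>^m over its m-th period, and choosing
   x 1 so that row 0 holds as well yields the eigenvector. Swapping b and c transposes the operator
   and reverses the winding number, which gives the left eigenvectors.

   If the determinant vanishes somewhere on the unit circle, there are bounded Bloch solutions g of
   the recurrence and u of its transpose; the Wronskian with u shows that (T(f) - \<mu>)(\<phi> g), with
   \<phi> decreasing like m^(-1/2) over the periods, is a limit of images that has no preimage in l^2.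
   So T(f) - \<mu> does not have closed range, \<mu> is in the essential spectrum, and there is nothing
   to prove. *)

theory Submission
  imports Defs
begin

section \<open>Laurent form of the symbol determinant\<close>

definition symbol_minus :: "nat \<Rightarrow> (nat \<Rightarrow> complex) \<Rightarrow> (nat \<Rightarrow> complex) \<Rightarrow> (nat \<Rightarrow> complex)
    \<Rightarrow> complex \<Rightarrow> complex \<Rightarrow> complex mat" where
  "symbol_minus k as bs cs \<mu> z = symbol k as bs cs z - \<mu> \<cdot>\<^sub>m 1\<^sub>m k"

lemma symbol_minus_carrier: "symbol_minus k as bs cs \<mu> z \<in> carrier_mat k k"
  unfolding symbol_minus_def symbol_def by auto

lemma symbol_minus_entry:
  assumes "i < k" "j < k"
  shows "symbol_minus k as bs cs \<mu> z $$ (i, j) =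
     (if i = k - 1 \<and> j = 0 then bs k / z else 0) + (if i = j then as (i + 1) - \<mu> else 0)
   + (if j = i + 1 then bs (i + 1) else 0) + (if i = j + 1 then cs (j + 1) else 0)
   + (if i = 0 \<and> j = k - 1 then z * cs k else 0)"
  using assms unfolding symbol_minus_def symbol_def by (auto simp: field_simps)

lemma symbol_minus_swap:
  assumes "z \<noteq> 0"
  shows "symbol_minus k as cs bs \<mu> z = transpose_mat (symbol_minus k as bs cs \<mu> (1 / z))"
  by (rule eq_matI) (use assms in \<open>auto simp: symbol_minus_entry symbol_minus_carrier[THEN carrier_matD(1)]
                                   symbol_minus_carrier[THEN carrier_matD(2)]\<close>)

lemma det_symbol_minus_swap:
  "z \<noteq> 0 \<Longrightarrow> det (symbol_minus k as cs bs \<mu> z) = det (symbol_minus k as bs cs \<mu> (1 / z))"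
  by (subst symbol_minus_swap) (simp_all add: det_transpose[OF symbol_minus_carrier])

definition laurent1 :: "(complex \<Rightarrow> complex) \<Rightarrow> bool" where
  "laurent1 f \<longleftrightarrow> (\<exists>A B C. \<forall>z. z \<noteq> 0 \<longrightarrow> f z = A / z + B + C * z)"

lemma laurent1_sum:
  assumes "finite S" "\<And>p. p \<in> S \<Longrightarrow> laurent1 (F p)"
  shows "laurent1 (\<lambda>z. \<Sum>p\<in>S. F p z)"
  using assms
proof (induction S rule: finite_induct)
  case empty
  show ?case unfolding laurent1_def by (intro exI[of _ 0]) simp
next
  case (insert p S)
  obtain A B C where S: "\<And>z. z \<noteq> 0 \<Longrightarrow> (\<Sum>p\<in>S. F p z) = A / z + B + C * z"
    using insert unfolding laurent1_def by blast
  obtain A' B' C' where p: "\<And>z. z \<noteq> 0 \<Longrightarrow> F p z = A' / z + B' + C' * z"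
    using insert.prems unfolding laurent1_def by blast
  have "(\<Sum>p\<in>insert p S. F p z) = (A + A') / z + (B + B') + (C + C') * z" if "z \<noteq> 0" for z
    using insert.hyps S[OF that] p[OF that] by (simp add: add_divide_distrib algebra_simps)
  then show ?case unfolding laurent1_def by blast
qed

lemma laurent1_cmult:
  assumes "laurent1 f"
  shows "laurent1 (\<lambda>z. c * f z)"
proof -
  obtain A B C where "\<And>z. z \<noteq> 0 \<Longrightarrow> f z = A / z + B + C * z"
    using assms unfolding laurent1_def by blast
  then have "c * f z = (c * A) / z + c * B + (c * C) * z" if "z \<noteq> 0" for z
    using that by (simp add: algebra_simps)
  then show ?thesis unfolding laurent1_def by blast
qed

lemma laurent1_prod:
  assumes "finite I"
    and "\<And>i z. i \<in> I \<Longrightarrow> F i z = \<alpha> i + \<beta> i * z + \<gamma> i / z"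
    and "\<And>i. i \<in> I \<Longrightarrow> i \<noteq> i0 \<Longrightarrow> \<beta> i = 0"
    and "\<And>i. i \<in> I \<Longrightarrow> i \<noteq> i1 \<Longrightarrow> \<gamma> i = 0"
  shows "laurent1 (\<lambda>z. \<Prod>i\<in>I. F i z)"
proof -
  have "\<exists>A B C. (\<forall>z. z \<noteq> 0 \<longrightarrow> (\<Prod>i\<in>I. F i z) = A / z + B + C * z)
                \<and> (i0 \<notin> I \<longrightarrow> C = 0) \<and> (i1 \<notin> I \<longrightarrow> A = 0)"
    using assms
  proof (induction I rule: finite_induct)
    case empty
    show ?case by (intro exI[of _ 0] exI[of _ 1]) simp
  next
    case (insert i I)
    then obtain A B C where
      IH: "\<And>z. z \<noteq> 0 \<Longrightarrow> (\<Prod>i\<in>I. F i z) = A / z + B + C * z"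
        and C: "i0 \<notin> I \<Longrightarrow> C = 0" and A: "i1 \<notin> I \<Longrightarrow> A = 0"
      by (metis insert_iff)
    have \<beta>C: "\<beta> i * C = 0" and \<gamma>A: "\<gamma> i * A = 0"
      using insert.hyps(2) insert.prems(2,3) C A by (metis insertI1 mult_eq_0_iff)+
    have "(\<Prod>i\<in>insert i I. F i z)
        = (\<alpha> i * A + \<gamma> i * B) / z + (\<alpha> i * B + \<beta> i * A + \<gamma> i * C) + (\<alpha> i * C + \<beta> i * B) * z"
      if z: "z \<noteq> 0" for z
    proof -
      have "(\<Prod>i\<in>insert i I. F i z) = (\<alpha> i + \<beta> i * z + \<gamma> i / z) * (A / z + B + C * z)"
        using insert.hyps insert.prems(1) IH[OF z] by simp
      also have "\<dots> = (\<alpha> i * A + \<gamma> i * B) / z + (\<alpha> i * B + \<beta> i * A + \<gamma> i * C) + (\<alpha> i * C + \<beta> i * B) * z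
                      + (\<beta> i * C) * z * z + (\<gamma> i * A) / (z * z)"
        using z by (simp add: field_simps)
      finally show ?thesis using \<beta>C \<gamma>A by simp
    qed
    then show ?case
      using insert.prems(2,3) C A by (intro exI conjI) (auto simp: \<beta>C \<gamma>A)
  qed
  then show ?thesis unfolding laurent1_def by blast
qed

text \<open>Only row \<open>0\<close> of \<open>f(z)\<close> contains \<open>z\<close> and only row \<open>k - 1\<close> contains \<open>1/z\<close>, so every term of
  the Leibniz expansion has degree at most one in each.\<close>

lemma laurent1_det_symbol_minus: "laurent1 (\<lambda>z. det (symbol_minus k as bs cs \<mu> z))"
proof -
  define \<alpha> where "\<alpha> i j = (if i = j then as (i + 1) - \<mu> else 0)
    + (if j = i + 1 then bs (i + 1) else 0) + (if i = j + 1 then cs (j + 1) else 0)" for i j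
  define \<beta> where "\<beta> i j = (if i = 0 \<and> j = k - 1 then cs k else 0)" for i j :: nat
  define \<gamma> where "\<gamma> i j = (if i = k - 1 \<and> j = 0 then bs k else 0)" for i j :: nat
  have entry: "symbol_minus k as bs cs \<mu> z $$ (i, j) = \<alpha> i j + \<beta> i j * z + \<gamma> i j / z"
    if "i < k" "j < k" for i j z
    using that unfolding \<alpha>_def \<beta>_def \<gamma>_def by (simp add: symbol_minus_entry)
  have "laurent1 (\<lambda>z. signof p * (\<Prod>i = 0..<k. symbol_minus k as bs cs \<mu> z $$ (i, p i)))"
    if "p permutes {0..<k}" for p
  proof (rule laurent1_cmult, rule laurent1_prod)
    show "symbol_minus k as bs cs \<mu> z $$ (i, p i) = \<alpha> i (p i) + \<beta> i (p i) * z + \<gamma> i (p i) / z"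
      if "i \<in> {0..<k}" for i z
      using that \<open>p permutes {0..<k}\<close> by (intro entry) (auto simp: permutes_in_image)
  qed (auto simp: \<beta>_def \<gamma>_def)
  then show ?thesis
    unfolding det_def'[OF symbol_minus_carrier] by (intro laurent1_sum) (auto simp: finite_permutations)
qed

section \<open>Winding number of a Laurent polynomial\<close>

lemma winding_number_unit_circlepath:
  assumes "cmod w \<noteq> 1"
  shows "winding_number (circlepath 0 1) w = (if cmod w < 1 then 1 else 0)"
proof (cases "cmod w < 1")
  case True
  then show ?thesis by (simp add: winding_number_circlepath)
next
  case False
  have "winding_number (circlepath 0 1) w = 0"
    by (rule winding_number_zero_outside[where s = "cball 0 1"])
       (use False assms in \<open>auto simp: valid_path_imp_path dist_norm\<close>)
  then show ?thesis using False by simp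
qed

lemma has_contour_integral_inverse_unit_circlepath:
  assumes "cmod w \<noteq> 1"
  shows "((\<lambda>z. 1 / (z - w)) has_contour_integral 2 * pi * \<i> * (if cmod w < 1 then 1 else 0))
           (circlepath 0 1)"
proof -
  have "w \<notin> path_image (circlepath 0 1)"
    using assms by (simp add: sphere_def dist_norm)
  then have "((\<lambda>z. 1 / (z - w)) has_contour_integral 2 * pi * \<i> * winding_number (circlepath 0 1) w)
      (circlepath 0 1)"
    by (rule has_contour_integral_winding_number[OF valid_path_circlepath])
  then show ?thesis unfolding winding_number_unit_circlepath[OF assms] .
qed

lemma has_contour_integral_sum_list_inverse_unit_circlepath:
  assumes "\<forall>w\<in>set ws. cmod w \<noteq> 1"
  shows "((\<lambda>z. \<Sum>w\<leftarrow>ws. 1 / (z - w)) has_contour_integral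
            2 * pi * \<i> * of_nat (length (filter (\<lambda>w. cmod w < 1) ws))) (circlepath 0 1)"
  using assms
proof (induction ws)
  case Nil
  show ?case using has_contour_integral_0 by simp
next
  case (Cons w ws)
  then have "((\<lambda>z. 1 / (z - w) + (\<Sum>w\<leftarrow>ws. 1 / (z - w))) has_contour_integral
     2 * pi * \<i> * (if cmod w < 1 then 1 else 0) + 2 * pi * \<i> * of_nat (length (filter (\<lambda>w. cmod w < 1) ws)))
     (circlepath 0 1)"
    by (intro has_contour_integral_add has_contour_integral_inverse_unit_circlepath) auto
  then show ?case by (cases "cmod w < 1") (simp_all add: algebra_simps)
qed

lemma has_field_derivative_prod_list_linear:
  fixes ws :: "complex list"
  assumes "z \<notin> set ws"
  shows "((\<lambda>z. \<Prod>w\<leftarrow>ws. z - w) has_field_derivative (\<Prod>w\<leftarrow>ws. z - w) * (\<Sum>w\<leftarrow>ws. 1 / (z - w))) (at z)"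
  using assms
proof (induction ws)
  case Nil
  show ?case by simp
next
  case (Cons w ws)
  have "z \<notin> set ws" "z \<noteq> w" using Cons.prems by auto
  have "((\<lambda>z. z - w) has_field_derivative 1) (at z)" by (auto intro!: derivative_eq_intros)
  from DERIV_mult[OF this Cons.IH[OF \<open>z \<notin> set ws\<close>]]
  have "((\<lambda>z. (z - w) * (\<Prod>w\<leftarrow>ws. z - w)) has_field_derivative
          ((z - w) * (\<Prod>w\<leftarrow>ws. z - w)) * (1 / (z - w) + (\<Sum>w\<leftarrow>ws. 1 / (z - w)))) (at z)"
    by (rule DERIV_cong) (use \<open>z \<noteq> w\<close> in \<open>simp add: field_simps\<close>)
  then show ?case by simp
qed

lemma winding_number_roots_over_z:
  fixes c :: complex and ws :: "complex list"
  defines "D \<equiv> \<lambda>z. c * (\<Prod>w\<leftarrow>ws. z - w) / z"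
  assumes "c \<noteq> 0" and roots: "\<forall>w\<in>set ws. cmod w \<noteq> 1"
  shows "winding_number (D \<circ> circlepath 0 1) 0 = of_nat (length (filter (\<lambda>w. cmod w < 1) ws)) - 1"
proof -
  let ?\<gamma> = "circlepath 0 1"
  define S where "S = - insert 0 (set ws)"
  have "open S" unfolding S_def by (intro open_Compl finite_imp_closed) simp
  have on_circle: "z \<noteq> 0" "z \<notin> set ws" if "z \<in> path_image ?\<gamma>" for z
    using that roots by auto
  have path_S: "path_image ?\<gamma> \<subseteq> S" unfolding S_def using on_circle by blast
  have D_nonzero: "D z \<noteq> 0" if "z \<in> S" for z
    using that \<open>c \<noteq> 0\<close> unfolding S_def D_def by (auto simp: prod_list_zero_iff)
  have deriv_D: "(D has_field_derivative D z * ((\<Sum>w\<leftarrow>ws. 1 / (z - w)) - 1 / z)) (at z)"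
    if "z \<in> S" for z
  proof -
    have "z \<noteq> 0" "z \<notin> set ws" using that unfolding S_def by auto
    then have "((\<lambda>z. c * (\<Prod>w\<leftarrow>ws. z - w) / z) has_field_derivative
      (c * ((\<Prod>w\<leftarrow>ws. z - w) * (\<Sum>w\<leftarrow>ws. 1 / (z - w))) * z - c * (\<Prod>w\<leftarrow>ws. z - w) * 1) / (z * z)) (at z)"
      by (intro DERIV_divide DERIV_cmult DERIV_ident has_field_derivative_prod_list_linear) auto
    then show ?thesis unfolding D_def using \<open>z \<noteq> 0\<close> by (simp add: field_simps)
  qed
  have holo: "D holomorphic_on S"
    using deriv_D by (meson field_differentiable_def holomorphic_on_def has_field_derivative_at_within)
  have "valid_path (D \<circ> ?\<gamma>)"
    by (rule valid_path_compose_holomorphic[OF valid_path_circlepath holo \<open>open S\<close> path_S])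
  moreover have "0 \<notin> path_image (D \<circ> ?\<gamma>)"
    using path_S D_nonzero by (auto simp: path_image_compose)
  ultimately have wind: "winding_number (D \<circ> ?\<gamma>) 0
      = 1 / (2 * pi * \<i>) * contour_integral (D \<circ> ?\<gamma>) (\<lambda>w. 1 / (w - 0))"
    by (rule winding_number_valid_path)
  have "contour_integral (D \<circ> ?\<gamma>) (\<lambda>w. 1 / (w - 0)) = contour_integral ?\<gamma> (\<lambda>z. deriv D z * (1 / (D z - 0)))"
    using holo \<open>open S\<close> path_S by (intro contour_integral_comp_analyticW) (auto simp: analytic_on_open)
  also have "\<dots> = contour_integral ?\<gamma> (\<lambda>z. (\<Sum>w\<leftarrow>ws. 1 / (z - w)) - 1 / (z - 0))"
  proof (rule contour_integral_eq)
    fix z assume "z \<in> path_image ?\<gamma>"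
    then have "z \<in> S" using path_S by blast
    then show "deriv D z * (1 / (D z - 0)) = (\<Sum>w\<leftarrow>ws. 1 / (z - w)) - 1 / (z - 0)"
      using DERIV_imp_deriv[OF deriv_D] D_nonzero by simp
  qed
  also have "\<dots> = 2 * pi * \<i> * of_nat (length (filter (\<lambda>w. cmod w < 1) ws)) - 2 * pi * \<i> * 1"
    using has_contour_integral_diff[OF has_contour_integral_sum_list_inverse_unit_circlepath[OF roots]
        has_contour_integral_inverse_unit_circlepath[of 0]]
    by (intro contour_integral_unique) simp
  finally show ?thesis unfolding wind by (simp add: field_simps)
qed

lemma laurent_factorization:
  fixes A B C :: complex
  assumes "A \<noteq> 0 \<or> B \<noteq> 0 \<or> C \<noteq> 0"
  obtains c ws where "c \<noteq> 0" "\<And>z. z \<noteq> 0 \<Longrightarrow> A / z + B + C * z = c * (\<Prod>w\<leftarrow>ws. z - w) / z"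
proof (cases "C = 0")
  case False
  define s where "s = csqrt (B\<^sup>2 - 4 * A * C)"
  define w1 where "w1 = (- B + s) / (2 * C)"
  define w2 where "w2 = (- B - s) / (2 * C)"
  have s2: "s * s = B * B - 4 * A * C" unfolding s_def by (simp flip: power2_eq_square)
  have "w1 * w2 = (B * B - s * s) / (4 * C * C)"
    unfolding w1_def w2_def using False by (simp add: field_simps)
  also have "\<dots> = A / C" unfolding s2 using False by (simp add: field_simps)
  finally have "w1 * w2 = A / C" .
  moreover have "w1 + w2 = - B / C"
    unfolding w1_def w2_def using False by (simp add: field_simps)
  ultimately have factor: "C * ((z - w1) * (z - w2)) = C * z * z + B * z + A" for z
  proof -
    have "C * ((z - w1) * (z - w2)) = C * z * z - C * (w1 + w2) * z + C * (w1 * w2)"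
      by (simp add: algebra_simps)
    then show ?thesis using \<open>w1 * w2 = A / C\<close> \<open>w1 + w2 = - B / C\<close> False by simp
  qed
  show ?thesis
  proof (rule that[of C "[w1, w2]"])
    show "A / z + B + C * z = C * (\<Prod>w\<leftarrow>[w1, w2]. z - w) / z" if "z \<noteq> 0" for z
      using factor[of z] that by (simp add: field_simps)
  qed fact
next
  case C: True
  show ?thesis
  proof (cases "B = 0")
    case False
    show ?thesis
    proof (rule that[of B "[- A / B]"])
      show "A / z + B + C * z = B * (\<Prod>w\<leftarrow>[- A / B]. z - w) / z" if "z \<noteq> 0" for z
        using that False C by (simp add: field_simps)
    qed fact
  next
    case True
    then show ?thesis using C assms by (intro that[of A "[]"]) auto
  qed
qed

lemma laurent_zeros_outside_if_winding_neg:
  fixes A B C w :: complex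
  defines "D \<equiv> \<lambda>z. A / z + B + C * z"
  assumes nonzero: "\<And>z. cmod z = 1 \<Longrightarrow> D z \<noteq> 0"
    and wind: "Re (winding_number (D \<circ> circlepath 0 1) 0) < 0"
    and "w \<noteq> 0" "D w = 0"
  shows "1 < cmod w"
proof -
  have "A \<noteq> 0 \<or> B \<noteq> 0 \<or> C \<noteq> 0" using nonzero[of 1] unfolding D_def by auto
  then obtain c ws where "c \<noteq> 0" and D: "\<And>z. z \<noteq> 0 \<Longrightarrow> D z = c * (\<Prod>v\<leftarrow>ws. z - v) / z"
    using laurent_factorization unfolding D_def by metis
  have root: "D v = 0" if "v \<noteq> 0" "v \<in> set ws" for v
    using that D[of v] by (auto simp: prod_list_zero_iff)
  have roots: "\<forall>v\<in>set ws. cmod v \<noteq> 1"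
  proof (intro ballI notI)
    fix v assume "v \<in> set ws" "cmod v = 1"
    moreover from \<open>cmod v = 1\<close> have "v \<noteq> 0" by auto
    ultimately show False using root nonzero by blast
  qed
  have "D \<circ> circlepath 0 1 = (\<lambda>z. c * (\<Prod>v\<leftarrow>ws. z - v) / z) \<circ> circlepath 0 1"
    by (rule ext) (simp add: D circlepath)
  then have "Re (of_nat (length (filter (\<lambda>v. cmod v < 1) ws)) - 1 :: complex) < 0"
    using wind winding_number_roots_over_z[OF \<open>c \<noteq> 0\<close> roots] by simp
  then have inside: "filter (\<lambda>v. cmod v < 1) ws = []" by simp
  have "w \<in> set ws" using D[of w] \<open>w \<noteq> 0\<close> \<open>D w = 0\<close> \<open>c \<noteq> 0\<close> by (auto simp: prod_list_zero_iff)
  then have "\<not> cmod w < 1" "cmod w \<noteq> 1" using inside roots by (auto simp: filter_empty_conv)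
  then show ?thesis by simp
qed

section \<open>The recurrence and its Bloch solutions\<close>

text \<open>For \<open>r \<ge> 1\<close> this is row \<open>r\<close> of \<open>(T(f) - \<mu>) x\<close> (rows are 0-based); at \<open>r = 0\<close> the
  truncated subtraction makes it junk, and the actual row 0 also carries the perturbation \<open>a\<close>.\<close>

definition row_residual :: "nat \<Rightarrow> (nat \<Rightarrow> complex) \<Rightarrow> (nat \<Rightarrow> complex) \<Rightarrow> (nat \<Rightarrow> complex) \<Rightarrow> complex
    \<Rightarrow> (nat \<Rightarrow> complex) \<Rightarrow> nat \<Rightarrow> complex" where
  "row_residual k as bs cs \<mu> x r =
     cs (per k (r - 1)) * x (r - 1) + (as (per k r) - \<mu>) * x r + bs (per k r) * x (Suc r)"

lemma Tpert_minus_eq_row_residual: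
  "r \<ge> 1 \<Longrightarrow> Tpert k a as bs cs x r - \<mu> * x r = row_residual k as bs cs \<mu> x r"
  unfolding Tpert_def row_residual_def by (simp add: algebra_simps)

lemma Tpert_tr_eq_Tpert_swap: "Tpert_tr k a as bs cs = Tpert k a as cs bs"
  unfolding Tpert_tr_def Tpert_def by simp

lemma per_mult_add: "j < k \<Longrightarrow> per k (m * k + j) = j + 1"
  unfolding per_def by simp

lemma bloch_power:
  fixes x :: "nat \<Rightarrow> complex"
  assumes "\<And>i. x (i + k) = \<nu> * x i"
  shows "x (m * k + j) = \<nu> ^ m * x j"
proof (induction m)
  case (Suc m)
  have "x (Suc m * k + j) = x ((m * k + j) + k)" by (simp add: algebra_simps)
  also have "\<dots> = \<nu> * x (m * k + j)" by (rule assms)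
  finally show ?case using Suc by (simp add: mult.assoc)
qed simp

text \<open>Row \<open>j\<close> of \<open>(f(1/\<nu>) - \<mu>) v\<close>, written so that the two corner entries of the symbol
  appear as the neighbours \<open>x (j - 1)\<close> and \<open>x (j + 1)\<close> of a Bloch solution with factor \<open>\<nu>\<close>.\<close>

lemma symbol_minus_mult_vec:
  assumes "j < k" "\<nu> \<noteq> 0"
  shows "(symbol_minus k as bs cs \<mu> (1 / \<nu>) *\<^sub>v vec k x) $ j =
     cs (if j = 0 then k else j) * (if j = 0 then x (k - 1) / \<nu> else x (j - 1))
     + (as (j + 1) - \<mu>) * x j + bs (j + 1) * (if Suc j = k then \<nu> * x 0 else x (Suc j))"
proof -
  let ?M = "symbol_minus k as bs cs \<mu> (1 / \<nu>)"
  have "(?M *\<^sub>v vec k x) $ j = (\<Sum>i<k. ?M $$ (j, i) * x i)"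
    using assms symbol_minus_carrier[of k as bs cs \<mu> "1 / \<nu>"]
    by (auto simp: mult_mat_vec_def scalar_prod_def row_def lessThan_atLeast0 intro!: sum.cong)
  also have "\<dots> = (\<Sum>i<k. (if i = 0 then (if j = k - 1 then bs k * \<nu> * x 0 else 0) else 0)
      + (if i = j then (as (j + 1) - \<mu>) * x j else 0)
      + (if i = j + 1 then bs (j + 1) * x (j + 1) else 0)
      + (if i = j - 1 then (if j \<ge> 1 then cs j * x (j - 1) else 0) else 0)
      + (if i = k - 1 then (if j = 0 then cs k * x (k - 1) / \<nu> else 0) else 0))"
    using assms by (intro sum.cong refl) (auto simp: symbol_minus_entry algebra_simps)
  also have "\<dots> = (if j = k - 1 then bs k * \<nu> * x 0 else 0) + (as (j + 1) - \<mu>) * x j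
      + (if j + 1 < k then bs (j + 1) * x (j + 1) else 0) + (if j \<ge> 1 then cs j * x (j - 1) else 0)
      + (if j = 0 then cs k * x (k - 1) / \<nu> else 0)"
    using assms less_imp_diff_less[of j k 1] by (simp add: sum.distrib)
  also have "\<dots> = cs (if j = 0 then k else j) * (if j = 0 then x (k - 1) / \<nu> else x (j - 1))
     + (as (j + 1) - \<mu>) * x j + bs (j + 1) * (if Suc j = k then \<nu> * x 0 else x (Suc j))"
    using assms by (auto simp: algebra_simps)
  finally show ?thesis .
qed

lemma row_residual_bloch:
  assumes "\<nu> \<noteq> 0" and bloch: "\<And>i. x (i + k) = \<nu> * x i" and "j < k" and "m * k + j \<ge> 1"
  shows "row_residual k as bs cs \<mu> x (m * k + j)
           = \<nu> ^ m * (symbol_minus k as bs cs \<mu> (1 / \<nu>) *\<^sub>v vec k x) $ j"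
proof -
  let ?r = "m * k + j"
  have pow: "x (m' * k + j') = \<nu> ^ m' * x j'" for m' j'
    by (rule bloch_power[where x = x and k = k and \<nu> = \<nu>, OF bloch])
  have next_eq: "x (Suc ?r) = \<nu> ^ m * (if Suc j = k then \<nu> * x 0 else x (Suc j))"
  proof (cases "Suc j = k")
    case True
    then have "x (Suc ?r) = x (Suc m * k + 0)" by (intro arg_cong[where f = x]) simp
    then show ?thesis using True pow[of "Suc m" 0] by simp
  next
    case False
    then show ?thesis using pow[of m "Suc j"] by simp
  qed
  have prev_eq: "x (?r - 1) = \<nu> ^ m * (if j = 0 then x (k - 1) / \<nu> else x (j - 1))"
    and per_prev: "per k (?r - 1) = (if j = 0 then k else j)"
  proof (atomize (full), cases "j = 0")
    case True
    with assms obtain m' where m': "m = Suc m'" by (cases m) auto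
    then have "?r - 1 = m' * k + (k - 1)" using True \<open>j < k\<close> by simp
    then show "x (?r - 1) = \<nu> ^ m * (if j = 0 then x (k - 1) / \<nu> else x (j - 1))
        \<and> per k (?r - 1) = (if j = 0 then k else j)"
      using True m' \<open>j < k\<close> \<open>\<nu> \<noteq> 0\<close> pow[of m' "k - 1"] per_mult_add[of "k - 1" k m'] by simp
  next
    case False
    then have "?r - 1 = m * k + (j - 1)" by simp
    then show "x (?r - 1) = \<nu> ^ m * (if j = 0 then x (k - 1) / \<nu> else x (j - 1))
        \<and> per k (?r - 1) = (if j = 0 then k else j)"
      using False \<open>j < k\<close> pow[of m "j - 1"] per_mult_add[of "j - 1" k m] by simp
  qed
  show ?thesis
    unfolding row_residual_def symbol_minus_mult_vec[OF \<open>j < k\<close> \<open>\<nu> \<noteq> 0\<close>] per_prev prev_eq next_eq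
      per_mult_add[OF \<open>j < k\<close>] pow[of m j]
    by (simp add: algebra_simps)
qed

lemma bloch_solution_iff:
  assumes "k \<ge> 1" "\<nu> \<noteq> 0" and bloch: "\<And>i. x (i + k) = \<nu> * x i"
  shows "(\<forall>r\<ge>1. row_residual k as bs cs \<mu> x r = 0)
           \<longleftrightarrow> symbol_minus k as bs cs \<mu> (1 / \<nu>) *\<^sub>v vec k x = 0\<^sub>v k"
proof
  assume rows: "\<forall>r\<ge>1. row_residual k as bs cs \<mu> x r = 0"
  show "symbol_minus k as bs cs \<mu> (1 / \<nu>) *\<^sub>v vec k x = 0\<^sub>v k"
  proof (rule eq_vecI)
    fix j assume "j < dim_vec (0\<^sub>v k :: complex vec)"
    then have "j < k" by simp
    then have "row_residual k as bs cs \<mu> x (1 * k + j)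
        = \<nu> ^ 1 * (symbol_minus k as bs cs \<mu> (1 / \<nu>) *\<^sub>v vec k x) $ j"
      using assms by (intro row_residual_bloch) auto
    then show "(symbol_minus k as bs cs \<mu> (1 / \<nu>) *\<^sub>v vec k x) $ j = 0\<^sub>v k $ j"
      using rows \<open>k \<ge> 1\<close> \<open>\<nu> \<noteq> 0\<close> \<open>j < k\<close> by simp
  qed (simp add: symbol_minus_carrier[THEN carrier_matD(1)])
next
  assume kernel: "symbol_minus k as bs cs \<mu> (1 / \<nu>) *\<^sub>v vec k x = 0\<^sub>v k"
  show "\<forall>r\<ge>1. row_residual k as bs cs \<mu> x r = 0"
  proof (intro allI impI)
    fix r :: nat assume "r \<ge> 1"
    have "r = r div k * k + r mod k" by simp
    moreover have "r mod k < k" using \<open>k \<ge> 1\<close> by simp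
    ultimately show "row_residual k as bs cs \<mu> x r = 0"
      using row_residual_bloch[where x = x and k = k and \<nu> = \<nu>, OF \<open>\<nu> \<noteq> 0\<close> bloch, of "r mod k" "r div k"]
        kernel \<open>r \<ge> 1\<close> by simp
  qed
qed

definition bloch_ext :: "nat \<Rightarrow> complex \<Rightarrow> complex vec \<Rightarrow> nat \<Rightarrow> complex" where
  "bloch_ext k \<nu> v i = \<nu> ^ (i div k) * v $ (i mod k)"

lemma bloch_ext_shift: "k \<ge> 1 \<Longrightarrow> bloch_ext k \<nu> v (i + k) = \<nu> * bloch_ext k \<nu> v i"
  unfolding bloch_ext_def by simp

lemma vec_bloch_ext: "v \<in> carrier_vec k \<Longrightarrow> vec k (bloch_ext k \<nu> v) = v"
  by (intro eq_vecI) (auto simp: bloch_ext_def)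

lemma norm_bloch_ext: "cmod \<nu> = 1 \<Longrightarrow> cmod (bloch_ext k \<nu> v i) = cmod (v $ (i mod k))"
  unfolding bloch_ext_def by (simp add: norm_mult norm_power)

lemma row_residual_bloch_ext:
  assumes "k \<ge> 1" "\<nu> \<noteq> 0" "v \<in> carrier_vec k" "symbol_minus k as bs cs \<mu> (1 / \<nu>) *\<^sub>v v = 0\<^sub>v k"
    and "r \<ge> 1"
  shows "row_residual k as bs cs \<mu> (bloch_ext k \<nu> v) r = 0"
  using bloch_solution_iff[where x = "bloch_ext k \<nu> v" and as = as and bs = bs and cs = cs and \<mu> = \<mu>,
      OF assms(1,2) bloch_ext_shift[OF assms(1)]] assms(3-)
  by (simp add: vec_bloch_ext)

section \<open>Transfer matrices and decay of solutions\<close>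

definition pair_comb :: "complex \<Rightarrow> complex \<Rightarrow> complex \<times> complex \<Rightarrow> complex \<times> complex \<Rightarrow> complex \<times> complex" where
  "pair_comb p q u v = (p * fst u + q * fst v, p * snd u + q * snd v)"

definition norm1 :: "complex \<times> complex \<Rightarrow> real" where
  "norm1 s = cmod (fst s) + cmod (snd s)"

lemma norm1_nonneg: "0 \<le> norm1 s"
  unfolding norm1_def by simp

lemma norm1_pair_comb: "norm1 (pair_comb p q u v) \<le> cmod p * norm1 u + cmod q * norm1 v"
proof -
  have "cmod (p * fst u + q * fst v) \<le> cmod p * cmod (fst u) + cmod q * cmod (fst v)"
    "cmod (p * snd u + q * snd v) \<le> cmod p * cmod (snd u) + cmod q * cmod (snd v)"
    by (metis norm_mult norm_triangle_ineq)+
  then show ?thesis unfolding norm1_def pair_comb_def by (simp add: algebra_simps)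
qed

lemma pair_comb_basis: "pair_comb (fst s) (snd s) (1, 0) (0, 1) = s"
  unfolding pair_comb_def by simp

text \<open>\<open>hom_sum a b m = (a\<^sup>m - b\<^sup>m) / (a - b)\<close>: by Cayley-Hamilton, the \<open>m\<close>-th power of a
  \<open>2 \<times> 2\<close> matrix with eigenvalues \<open>a, b\<close> is a combination of the matrix and the identity
  with these coefficients.\<close>

primrec hom_sum :: "complex \<Rightarrow> complex \<Rightarrow> nat \<Rightarrow> complex" where
  "hom_sum a b 0 = 0"
| "hom_sum a b (Suc m) = a ^ m + b * hom_sum a b m"

lemma hom_sum_Suc_Suc: "hom_sum a b (Suc (Suc m)) = (a + b) * hom_sum a b (Suc m) - a * b * hom_sum a b m"
  by (simp add: algebra_simps)

lemma hom_sum_bound: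
  assumes "0 \<le> \<rho>" "cmod a \<le> \<rho>" "cmod b \<le> \<rho>"
  shows "\<rho> * cmod (hom_sum a b m) \<le> real m * \<rho> ^ m"
proof (induction m)
  case (Suc m)
  have "\<rho> * cmod (hom_sum a b (Suc m)) \<le> \<rho> * (cmod a ^ m + cmod b * cmod (hom_sum a b m))"
    using assms(1) by (intro mult_left_mono)
      (auto simp: norm_mult norm_power intro: order.trans[OF norm_triangle_ineq])
  also have "\<dots> = \<rho> * cmod a ^ m + cmod b * (\<rho> * cmod (hom_sum a b m))"
    by (simp add: algebra_simps)
  also have "\<dots> \<le> \<rho> * \<rho> ^ m + \<rho> * (real m * \<rho> ^ m)"
  proof (rule add_mono)
    show "\<rho> * cmod a ^ m \<le> \<rho> * \<rho> ^ m"
      using assms by (intro mult_left_mono power_mono) auto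
    show "cmod b * (\<rho> * cmod (hom_sum a b m)) \<le> \<rho> * (real m * \<rho> ^ m)"
      by (rule mult_mono) (use assms Suc in auto)
  qed
  also have "\<dots> = real (Suc m) * \<rho> ^ Suc m"
    by (simp add: algebra_simps)
  finally show ?case .
qed simp

lemma exists_eigenvector_2x2:
  fixes \<alpha> \<beta> \<gamma> \<delta> r :: complex
  assumes "(\<alpha> - r) * (\<delta> - r) = \<beta> * \<gamma>"
  obtains e where "e \<noteq> (0, 0)" "\<alpha> * fst e + \<beta> * snd e = r * fst e" "\<gamma> * fst e + \<delta> * snd e = r * snd e"
proof (cases "\<beta> = 0")
  case False
  show ?thesis by (rule that[of "(\<beta>, r - \<alpha>)"]) (use False assms in \<open>auto simp: algebra_simps\<close>)
next
  case \<beta>: True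
  show ?thesis
  proof (cases "\<gamma> = 0")
    case False
    show ?thesis by (rule that[of "(r - \<delta>, \<gamma>)"]) (use False \<beta> assms in \<open>auto simp: algebra_simps\<close>)
  next
    case \<gamma>: True
    show ?thesis
    proof (cases "\<alpha> = r")
      case True
      show ?thesis by (rule that[of "(1, 0)"]) (use True \<beta> \<gamma> in auto)
    next
      case False
      then have "\<delta> = r" using assms \<beta> by simp
      then show ?thesis by (intro that[of "(0, 1)"]) (use \<beta> \<gamma> in auto)
    qed
  qed
qed

lemma linear_times_power_le:
  assumes "0 \<le> q" "q < 1"
  shows "(real m + 1) * q ^ m \<le> 1 / (1 - q)"
proof -
  have "(real m + 1) * q ^ m = (\<Sum>j<Suc m. q ^ m)" by simp
  also have "\<dots> \<le> (\<Sum>j<Suc m. q ^ j)"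
    using assms by (intro sum_mono power_decreasing) auto
  also have "\<dots> = (1 - q ^ Suc m) / (1 - q)"
    using assms by (subst sum_gp_strict) auto
  also have "\<dots> \<le> 1 / (1 - q)"
    using assms by (intro divide_right_mono) auto
  finally show ?thesis .
qed

lemma summable_comp_div:
  fixes f :: "nat \<Rightarrow> real"
  assumes nonneg: "\<And>m. 0 \<le> f m" and "summable f" and "k > 0"
  shows "summable (\<lambda>i. f (i div k))"
proof (rule summableI_nonneg_bounded)
  show "0 \<le> f (i div k)" for i using nonneg .
  fix n
  have "(\<Sum>i<n. f (i div k)) \<le> (\<Sum>i<n * k. f (i div k))"
    using \<open>k > 0\<close> nonneg by (intro sum_mono2) auto
  also have "\<dots> = (\<Sum>m<n. \<Sum>i\<in>{m * k..<m * k + k}. f (i div k))"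
    by (rule sum.nat_group[symmetric])
  also have "\<dots> = (\<Sum>m<n. real k * f m)"
  proof (intro sum.cong refl)
    fix m
    have "i div k = m" if "i \<in> {m * k..<m * k + k}" for i
      using that by (intro div_nat_eqI) (auto simp: algebra_simps)
    then show "(\<Sum>i\<in>{m * k..<m * k + k}. f (i div k)) = real k * f m" by simp
  qed
  also have "\<dots> \<le> real k * suminf f"
    using \<open>summable f\<close> nonneg by (simp add: sum_distrib_left[symmetric] mult_left_mono sum_le_suminf)
  finally show "(\<Sum>i<n. f (i div k)) \<le> real k * suminf f" .
qed

lemma ceiling_divide_eq:
  assumes "k \<ge> 1" "j \<ge> 1"
  shows "\<lceil>real j / real k\<rceil> = int ((j - 1) div k) + 1"
proof (rule ceiling_unique)
  define m where "m = (j - 1) div k"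
  define t where "t = (j - 1) mod k"
  have j: "j = m * k + t + 1" and "t < k" "real k > 0"
    unfolding m_def t_def using assms by simp_all
  have "real j \<le> (real m + 1) * real k" using j \<open>t < k\<close> by (simp add: algebra_simps)
  then show "real j / real k \<le> real_of_int (int ((j - 1) div k) + 1)"
    using \<open>real k > 0\<close> unfolding m_def[symmetric] by (simp add: divide_le_eq)
  have "real m * real k < real j" using j by simp
  then show "real_of_int (int ((j - 1) div k) + 1) - 1 < real j / real k"
    using \<open>real k > 0\<close> unfolding m_def[symmetric] by (simp add: less_divide_eq)
qed

lemma l2_if_block_geometric:
  assumes "k \<ge> 1" "0 \<le> K" "0 \<le> \<rho>" "\<rho> < 1"
    and bound: "\<And>i. cmod (x i) \<le> K * (real (i div k) + 1) * \<rho> ^ (i div k)"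
  shows "l2 x"
proof -
  define q where "q = sqrt \<rho>"
  have "0 \<le> q" "q < 1" and q_sq: "q * q = \<rho>" unfolding q_def using assms by auto
  have square_bound: "(cmod (x i))\<^sup>2 \<le> (K / (1 - q))\<^sup>2 * \<rho> ^ (i div k)" for i
  proof -
    let ?m = "i div k"
    have "(real ?m + 1) * \<rho> ^ ?m = ((real ?m + 1) * q ^ ?m) * q ^ ?m"
      unfolding q_sq[symmetric] by (simp add: power_mult_distrib)
    also have "\<dots> \<le> 1 / (1 - q) * q ^ ?m"
      using \<open>0 \<le> q\<close> \<open>q < 1\<close> by (intro mult_right_mono linear_times_power_le) auto
    finally have "K * ((real ?m + 1) * \<rho> ^ ?m) \<le> K * (1 / (1 - q) * q ^ ?m)"
      using \<open>0 \<le> K\<close> by (rule mult_left_mono)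
    then have "cmod (x i) \<le> K / (1 - q) * q ^ ?m"
      using bound[of i] by (simp add: mult.assoc)
    then have "(cmod (x i))\<^sup>2 \<le> (K / (1 - q) * q ^ ?m)\<^sup>2"
      by (intro power_mono) auto
    also have "\<dots> = (K / (1 - q))\<^sup>2 * \<rho> ^ ?m"
      unfolding q_sq[symmetric] by (simp add: power_mult_distrib power2_eq_square)
    finally show ?thesis .
  qed
  have "summable (\<lambda>i. (K / (1 - q))\<^sup>2 * \<rho> ^ (i div k))"
    using assms by (intro summable_mult summable_comp_div summable_geometric) auto
  then show ?thesis
    unfolding l2_def by (rule summable_comparison_test'[where N = 0]) (simp add: square_bound)
qed

lemma decay_bound_if_block_geometric:
  assumes "k \<ge> 1" "0 \<le> K" "0 \<le> \<rho>" "\<rho> < 1"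
    and bound: "\<And>i. cmod (x i) \<le> K * (real (i div k) + 1) * \<rho> ^ (i div k) * (cmod (x 0) + cmod (x 1))"
  shows "decay_bound k (2 * K) \<rho> x"
proof -
  let ?N = "cmod (x 0) + cmod (x 1)"
  have "cmod (x i) \<le> K * (1 / (1 - \<rho>)) * ?N" for i
  proof -
    have "(real (i div k) + 1) * \<rho> ^ (i div k) \<le> 1 / (1 - \<rho>)"
      by (rule linear_times_power_le[OF \<open>0 \<le> \<rho>\<close> \<open>\<rho> < 1\<close>])
    then have "K * ((real (i div k) + 1) * \<rho> ^ (i div k)) * ?N \<le> K * (1 / (1 - \<rho>)) * ?N"
      using \<open>0 \<le> K\<close> by (intro mult_right_mono mult_left_mono) auto
    then show ?thesis using bound[of i] by (simp add: mult.assoc)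
  qed
  then have bdd: "bdd_above (range (\<lambda>i. cmod (x i)))" by (intro bdd_aboveI2)
  define S where "S = (SUP i. cmod (x i))"
  have S_ge: "cmod (x i) \<le> S" for i unfolding S_def by (rule cSUP_upper[OF _ bdd]) simp
  show ?thesis
    unfolding decay_bound_def S_def[symmetric]
  proof (intro allI impI)
    fix j :: nat assume "1 \<le> j"
    define m where "m = (j - 1) div k"
    have ceil: "\<lceil>real j / real k\<rceil> = int m + 1"
      unfolding m_def by (rule ceiling_divide_eq[OF \<open>k \<ge> 1\<close> \<open>1 \<le> j\<close>])
    have "cmod (x (j - 1)) \<le> K * (real m + 1) * \<rho> ^ m * ?N"
      using bound[of "j - 1"] unfolding m_def .
    also have "\<dots> \<le> K * (real m + 1) * \<rho> ^ m * (2 * S)"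
      using S_ge[of 0] S_ge[of 1] assms by (intro mult_left_mono) auto
    finally have "cmod (x (j - 1)) \<le> (2 * K * (real m + 1) * \<rho> ^ m) * S"
      by (simp add: algebra_simps)
    moreover have "0 \<le> 2 * K * (real m + 1) * \<rho> ^ m" "0 \<le> S"
      using assms S_ge[of 0] by (auto intro: order_trans[OF norm_ge_zero])
    ultimately have "cmod (x (j - 1)) / S \<le> 2 * K * (real m + 1) * \<rho> ^ m"
      by (cases "S = 0") (simp_all add: pos_divide_le_eq)
    then show "cmod (x (j - 1)) / S \<le> 2 * K * real_of_int \<lceil>real j / real k\<rceil> * \<rho> ^ (nat \<lceil>real j / real k\<rceil> - 1)"
      unfolding ceil by (simp add: nat_add_distrib add.commute)
  qed
qed

locale periodic_tridiag =
  fixes k :: nat and as bs cs :: "nat \<Rightarrow> complex" and \<mu> :: complex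
  assumes k_pos: "k \<ge> 1"
    and bs_nonzero: "\<And>j. 1 \<le> j \<Longrightarrow> j \<le> k \<Longrightarrow> bs j \<noteq> 0"
    and cs_nonzero: "\<And>j. 1 \<le> j \<Longrightarrow> j \<le> k \<Longrightarrow> cs j \<noteq> 0"

context periodic_tridiag
begin

lemma per_bounds: "1 \<le> per k r" "per k r \<le> k"
  unfolding per_def using k_pos by (simp_all add: Suc_leI)

lemma bs_per_nonzero: "bs (per k r) \<noteq> 0"
  using bs_nonzero per_bounds by blast

lemma cs_per_nonzero: "cs (per k r) \<noteq> 0"
  using cs_nonzero per_bounds by blast

text \<open>Row \<open>r + 1\<close> of the recurrence solved for \<open>x (r + 2)\<close>, acting on \<open>(x r, x (r + 1))\<close>.\<close>

definition transfer_step :: "nat \<Rightarrow> complex \<times> complex \<Rightarrow> complex \<times> complex" where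
  "transfer_step r s =
     (snd s, - (cs (per k r) * fst s + (as (per k (Suc r)) - \<mu>) * snd s) / bs (per k (Suc r)))"

primrec transfer :: "nat \<Rightarrow> complex \<times> complex \<Rightarrow> complex \<times> complex" where
  "transfer 0 s = s"
| "transfer (Suc r) s = transfer_step r (transfer r s)"

definition solution :: "complex \<times> complex \<Rightarrow> nat \<Rightarrow> complex" where
  "solution s i = fst (transfer i s)"

lemma transfer_eq: "transfer i s = (solution s i, solution s (Suc i))"
  unfolding solution_def by (simp add: transfer_step_def)

lemma solution_0: "solution s 0 = fst s" and solution_1: "solution s 1 = snd s"
  unfolding solution_def by (simp_all add: transfer_step_def)

lemma row_residual_solution:
  assumes "r \<ge> 1"
  shows "row_residual k as bs cs \<mu> (solution s) r = 0"
proof -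
  obtain r' where r: "r = Suc r'" using assms by (cases r) auto
  have "solution s (Suc (Suc r')) = snd (transfer (Suc r') s)"
    unfolding solution_def by (simp add: transfer_step_def)
  also have "\<dots> = - (cs (per k r') * solution s r' + (as (per k (Suc r')) - \<mu>) * solution s (Suc r'))
                    / bs (per k (Suc r'))"
    using transfer_eq[of r' s] by (simp add: transfer_step_def)
  finally show ?thesis
    unfolding row_residual_def r using bs_per_nonzero[of "Suc r'"] by (simp add: field_simps)
qed

lemma solution_unique:
  assumes "\<And>r. r \<ge> 1 \<Longrightarrow> row_residual k as bs cs \<mu> x r = 0"
  shows "solution (x 0, x 1) = x"
proof -
  have "transfer i (x 0, x 1) = (x i, x (Suc i))" for i
  proof (induction i)
    case (Suc i)
    have "x (Suc (Suc i)) = - (cs (per k i) * x i + (as (per k (Suc i)) - \<mu>) * x (Suc i)) / bs (per k (Suc i))"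
      using assms[of "Suc i"] bs_per_nonzero[of "Suc i"] unfolding row_residual_def by (simp add: field_simps)
    then show ?case using Suc by (simp add: transfer_step_def)
  qed simp
  then show ?thesis unfolding solution_def by auto
qed

lemma transfer_pair_comb: "transfer r (pair_comb p q u v) = pair_comb p q (transfer r u) (transfer r v)"
  by (induction r) (simp_all add: transfer_step_def pair_comb_def bs_per_nonzero field_simps)

lemma solution_pair_comb: "solution (pair_comb p q u v) i = p * solution u i + q * solution v i"
  unfolding solution_def transfer_pair_comb by (simp add: pair_comb_def)

lemma transfer_add_period: "transfer (r + k) s = transfer r (transfer k s)"
proof -
  have "per k (r + k) = per k r" "per k (Suc (r + k)) = per k (Suc r)" for r
    unfolding per_def by (simp_all flip: add_Suc)
  then have "transfer_step (r + k) = transfer_step r" for r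
    unfolding transfer_step_def by (simp add: fun_eq_iff)
  then show ?thesis by (induction r) simp_all
qed

definition monodromy :: "complex \<times> complex \<Rightarrow> complex \<times> complex" where
  "monodromy = transfer k"

lemma transfer_add_periods: "transfer (r + m * k) s = transfer r ((monodromy ^^ m) s)"
proof (induction m arbitrary: s)
  case (Suc m)
  have "transfer (r + Suc m * k) s = transfer ((r + m * k) + k) s" by (simp add: algebra_simps)
  also have "\<dots> = transfer r ((monodromy ^^ m) (monodromy s))"
    unfolding transfer_add_period monodromy_def[symmetric] Suc ..
  finally show ?case by (simp only: funpow_Suc_right comp_def)
qed simp

definition transfer_bound :: "nat \<Rightarrow> real" where
  "transfer_bound r = norm1 (transfer r (1, 0)) + norm1 (transfer r (0, 1))"

lemma norm1_transfer_le: "norm1 (transfer r s) \<le> transfer_bound r * norm1 s"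
proof -
  have "norm1 (transfer r s) \<le> cmod (fst s) * norm1 (transfer r (1, 0)) + cmod (snd s) * norm1 (transfer r (0, 1))"
    using norm1_pair_comb transfer_pair_comb pair_comb_basis by metis
  also have "\<dots> \<le> transfer_bound r * norm1 s"
    unfolding transfer_bound_def norm1_def[of s] using norm1_nonneg[of "transfer r (1, 0)"] norm1_nonneg[of "transfer r (0, 1)"]
    by (simp add: algebra_simps add_mono mult_left_mono)
  finally show ?thesis .
qed

lemma transfer_bound_nonneg: "0 \<le> transfer_bound r"
  unfolding transfer_bound_def by (simp add: norm1_nonneg)

definition mono_trace :: complex where
  "mono_trace = fst (monodromy (1, 0)) + snd (monodromy (0, 1))"

definition mono_det :: complex where
  "mono_det = fst (monodromy (1, 0)) * snd (monodromy (0, 1)) - fst (monodromy (0, 1)) * snd (monodromy (1, 0))"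

lemma monodromy_matrix:
  "monodromy s = (fst (monodromy (1, 0)) * fst s + fst (monodromy (0, 1)) * snd s,
                  snd (monodromy (1, 0)) * fst s + snd (monodromy (0, 1)) * snd s)"
  using transfer_pair_comb[of k "fst s" "snd s" "(1, 0)" "(0, 1)"]
  unfolding monodromy_def pair_comb_basis by (simp add: pair_comb_def)

lemma monodromy_cayley_hamilton: "monodromy (monodromy s) = pair_comb mono_trace (- mono_det) (monodromy s) s"
  by (subst (1 2 3) monodromy_matrix) (simp add: pair_comb_def mono_trace_def mono_det_def algebra_simps)

lemma monodromy_power:
  assumes "r1 + r2 = mono_trace" "r1 * r2 = mono_det"
  shows "(monodromy ^^ Suc m) s = pair_comb (hom_sum r1 r2 (Suc m)) (- mono_det * hom_sum r1 r2 m) (monodromy s) s"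
proof (induction m arbitrary: s)
  case (Suc m)
  have "(monodromy ^^ Suc (Suc m)) s = monodromy ((monodromy ^^ Suc m) s)" by simp
  also have "\<dots> = monodromy (pair_comb (hom_sum r1 r2 (Suc m)) (- mono_det * hom_sum r1 r2 m) (monodromy s) s)"
    using Suc by simp
  also have "\<dots> = pair_comb (hom_sum r1 r2 (Suc m)) (- mono_det * hom_sum r1 r2 m) (monodromy (monodromy s)) (monodromy s)"
    unfolding monodromy_def by (rule transfer_pair_comb)
  also have "\<dots> = pair_comb (hom_sum r1 r2 (Suc (Suc m))) (- mono_det * hom_sum r1 r2 (Suc m)) (monodromy s) s"
    unfolding monodromy_cayley_hamilton hom_sum_Suc_Suc assms[symmetric] by (simp add: pair_comb_def algebra_simps)
  finally show ?case .
qed (simp add: pair_comb_def)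

text \<open>An eigenvalue \<open>r\<close> of the monodromy gives a Bloch solution with factor \<open>r\<close>, hence a zero
  \<open>1/r\<close> of \<open>det (f(z) - \<mu>)\<close>.\<close>

lemma monodromy_eigenvalue_inside:
  assumes zeros_outside: "\<And>w. w \<noteq> 0 \<Longrightarrow> det (symbol_minus k as bs cs \<mu> w) = 0 \<Longrightarrow> 1 < cmod w"
    and r: "r * r = mono_trace * r - mono_det"
  shows "cmod r < 1"
proof (rule ccontr)
  assume "\<not> cmod r < 1"
  then have "r \<noteq> 0" "cmod (1 / r) \<le> 1" by (auto simp: norm_divide divide_le_eq)
  have "(fst (monodromy (1, 0)) - r) * (snd (monodromy (0, 1)) - r) = fst (monodromy (0, 1)) * snd (monodromy (1, 0))"
    using r unfolding mono_trace_def mono_det_def by (simp add: algebra_simps)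
  then obtain e where "e \<noteq> (0, 0)"
    and "fst (monodromy (1, 0)) * fst e + fst (monodromy (0, 1)) * snd e = r * fst e"
    and "snd (monodromy (1, 0)) * fst e + snd (monodromy (0, 1)) * snd e = r * snd e"
    by (rule exists_eigenvector_2x2)
  then have eig: "monodromy e = pair_comb r 0 e e"
    by (subst monodromy_matrix) (simp add: pair_comb_def)
  define x where "x = solution e"
  have bloch: "x (i + k) = r * x i" for i
  proof -
    have "transfer (i + k) e = pair_comb r 0 (transfer i e) (transfer i e)"
      by (simp only: transfer_add_period monodromy_def[symmetric] eig transfer_pair_comb)
    then show ?thesis unfolding x_def solution_def by (simp add: pair_comb_def)
  qed
  have "symbol_minus k as bs cs \<mu> (1 / r) *\<^sub>v vec k x = 0\<^sub>v k"
    using bloch_solution_iff[where x = x, OF k_pos \<open>r \<noteq> 0\<close> bloch] row_residual_solution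
    unfolding x_def by blast
  moreover have "vec k x \<noteq> 0\<^sub>v k"
  proof
    assume "vec k x = 0\<^sub>v k"
    then have vanish: "x j = 0" if "j < k" for j
      using that by (metis index_vec index_zero_vec(1))
    then have "x 0 = 0" using k_pos by simp
    have "x 1 = 0"
    proof (cases "k = 1")
      case True
      then show ?thesis using bloch[of 0] \<open>x 0 = 0\<close> by simp
    next
      case False
      then show ?thesis using k_pos vanish[of 1] by simp
    qed
    with \<open>x 0 = 0\<close> show False
      using \<open>e \<noteq> (0, 0)\<close> unfolding x_def solution_0 solution_1 by (simp add: prod_eq_iff)
  qed
  ultimately have "det (symbol_minus k as bs cs \<mu> (1 / r)) = 0"
    using det_0_iff_vec_prod_zero[OF symbol_minus_carrier] vec_carrier by blast
  then show False using zeros_outside[of "1 / r"] \<open>r \<noteq> 0\<close> \<open>cmod (1 / r) \<le> 1\<close> by simp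
qed

lemma monodromy_power_bound:
  assumes "r1 + r2 = mono_trace" "r1 * r2 = mono_det"
    and "0 < \<rho>" "\<rho> < 1" "cmod r1 \<le> \<rho>" "cmod r2 \<le> \<rho>"
  shows "norm1 ((monodromy ^^ n) s) \<le> (transfer_bound k + 1) / \<rho> * (real n + 1) * \<rho> ^ n * norm1 s"
proof (cases n)
  case 0
  have "1 \<le> (transfer_bound k + 1) / \<rho>"
    using assms transfer_bound_nonneg[of k] by (simp add: field_simps)
  from mult_right_mono[OF this norm1_nonneg[of s]] show ?thesis using 0 by simp
next
  case (Suc m)
  let ?h1 = "hom_sum r1 r2 (Suc m)" and ?h0 = "hom_sum r1 r2 m"
  have "\<rho> * cmod ?h1 \<le> \<rho> * ((real m + 1) * \<rho> ^ m)"
    using hom_sum_bound[of \<rho> r1 r2 "Suc m"] assms by (simp add: algebra_simps)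
  then have h1: "cmod ?h1 \<le> (real m + 1) * \<rho> ^ m"
    using \<open>0 < \<rho>\<close> by simp
  have "cmod mono_det \<le> \<rho> * \<rho>"
    unfolding assms(2)[symmetric] norm_mult using assms by (intro mult_mono) auto
  then have "cmod (- mono_det * ?h0) \<le> \<rho> * (\<rho> * cmod ?h0)"
    unfolding norm_mult norm_minus_cancel mult.assoc[symmetric] by (rule mult_right_mono) simp
  also have "\<dots> \<le> 1 * (real m * \<rho> ^ m)"
    by (rule mult_mono) (use hom_sum_bound[of \<rho> r1 r2 m] assms in auto)
  also have "\<dots> \<le> (real m + 1) * \<rho> ^ m"
    using \<open>0 < \<rho>\<close> by (simp add: mult_right_mono)
  finally have h0: "cmod (- mono_det * ?h0) \<le> (real m + 1) * \<rho> ^ m" .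
  have "norm1 ((monodromy ^^ n) s) \<le> cmod ?h1 * norm1 (monodromy s) + cmod (- mono_det * ?h0) * norm1 s"
    unfolding Suc monodromy_power[OF assms(1,2)] by (rule norm1_pair_comb)
  also have "\<dots> \<le> (real m + 1) * \<rho> ^ m * (transfer_bound k * norm1 s) + (real m + 1) * \<rho> ^ m * norm1 s"
    using h1 h0 norm1_transfer_le[of k s] \<open>0 < \<rho>\<close>
    by (intro add_mono mult_mono) (auto simp: monodromy_def norm1_nonneg)
  also have "\<dots> = (transfer_bound k + 1) / \<rho> * (real m + 1) * \<rho> ^ Suc m * norm1 s"
    using \<open>0 < \<rho>\<close> by (simp add: field_simps)
  also have "\<dots> \<le> (transfer_bound k + 1) / \<rho> * (real n + 1) * \<rho> ^ n * norm1 s"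
    using Suc \<open>0 < \<rho>\<close> transfer_bound_nonneg[of k] norm1_nonneg[of s]
    by (intro mult_right_mono mult_left_mono) auto
  finally show ?thesis .
qed

text \<open>The factor \<open>real (i div k) + 1\<close> accounts for a possible Jordan block of the monodromy.\<close>

lemma solution_decay:
  assumes zeros_outside: "\<And>w. w \<noteq> 0 \<Longrightarrow> det (symbol_minus k as bs cs \<mu> w) = 0 \<Longrightarrow> 1 < cmod w"
  obtains K \<rho> where "0 < K" "0 < \<rho>" "\<rho> < 1"
    and "\<And>s i. cmod (solution s i) \<le> K * (real (i div k) + 1) * \<rho> ^ (i div k) * norm1 s"
proof -
  define d where "d = csqrt (mono_trace\<^sup>2 - 4 * mono_det)"
  define r1 where "r1 = (mono_trace + d) / 2"
  define r2 where "r2 = (mono_trace - d) / 2"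
  have "d * d = mono_trace\<^sup>2 - 4 * mono_det" unfolding d_def by (simp flip: power2_eq_square)
  then have r12: "r1 + r2 = mono_trace" "r1 * r2 = mono_det"
    unfolding r1_def r2_def by (simp_all add: field_simps power2_eq_square)
  then have "r * r = mono_trace * r - mono_det" if "r = r1 \<or> r = r2" for r
    using that unfolding r12[symmetric] by (auto simp: algebra_simps)
  then have "cmod r1 < 1" "cmod r2 < 1"
    using monodromy_eigenvalue_inside[OF zeros_outside] by blast+
  define \<rho> where "\<rho> = max (max (cmod r1) (cmod r2)) (1 / 2)"
  have "0 < \<rho>" "\<rho> < 1" "cmod r1 \<le> \<rho>" "cmod r2 \<le> \<rho>"
    unfolding \<rho>_def using \<open>cmod r1 < 1\<close> \<open>cmod r2 < 1\<close> by auto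
  define Kt where "Kt = (\<Sum>t<k. transfer_bound t)"
  define K where "K = Kt * ((transfer_bound k + 1) / \<rho>)"
  have Kt: "transfer_bound t \<le> Kt" if "t < k" for t
    unfolding Kt_def using that transfer_bound_nonneg by (intro member_le_sum) auto
  have "transfer_bound 0 = 2" unfolding transfer_bound_def norm1_def by simp
  then have "0 < Kt" using Kt[of 0] k_pos by simp
  then have "0 < K" unfolding K_def using \<open>0 < \<rho>\<close> transfer_bound_nonneg[of k] by simp
  moreover have "cmod (solution s i) \<le> K * (real (i div k) + 1) * \<rho> ^ (i div k) * norm1 s" for s i
  proof -
    let ?m = "i div k" and ?t = "i mod k"
    have "solution s i = fst (transfer ?t ((monodromy ^^ ?m) s))"
      using transfer_add_periods[of ?t ?m s] unfolding solution_def by simp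
    also have "cmod \<dots> \<le> norm1 (transfer ?t ((monodromy ^^ ?m) s))"
      unfolding norm1_def by simp
    also have "\<dots> \<le> transfer_bound ?t * norm1 ((monodromy ^^ ?m) s)"
      by (rule norm1_transfer_le)
    also have "\<dots> \<le> Kt * ((transfer_bound k + 1) / \<rho> * (real ?m + 1) * \<rho> ^ ?m * norm1 s)"
    proof (rule mult_mono)
      show "norm1 ((monodromy ^^ ?m) s) \<le> (transfer_bound k + 1) / \<rho> * (real ?m + 1) * \<rho> ^ ?m * norm1 s"
        by (rule monodromy_power_bound[OF r12 \<open>0 < \<rho>\<close> \<open>\<rho> < 1\<close> \<open>cmod r1 \<le> \<rho>\<close> \<open>cmod r2 \<le> \<rho>\<close>])
    qed (use Kt[of ?t] k_pos \<open>0 < Kt\<close> norm1_nonneg in auto)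
    finally show ?thesis unfolding K_def by (simp add: algebra_simps)
  qed
  ultimately show ?thesis using that \<open>0 < \<rho>\<close> \<open>\<rho> < 1\<close> by blast
qed

lemma Tpert_solution:
  assumes "bs 1 * x1 = \<mu> - as 1 - a"
  shows "Tpert k a as bs cs (solution (1, x1)) = (\<lambda>i. \<mu> * solution (1, x1) i)"
proof
  fix r
  show "Tpert k a as bs cs (solution (1, x1)) r = \<mu> * solution (1, x1) r"
  proof (cases "r = 0")
    case True
    have "solution (1, x1) (Suc 0) = x1" using solution_1 by simp
    then show ?thesis
      using True assms unfolding Tpert_def per_def by (simp add: solution_0 algebra_simps)
  next
    case False
    then have "Tpert k a as bs cs (solution (1, x1)) r - \<mu> * solution (1, x1) r = 0"
      by (simp add: Tpert_minus_eq_row_residual row_residual_solution)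
    then show ?thesis by simp
  qed
qed

lemma decaying_eigenvector:
  assumes "\<And>w. w \<noteq> 0 \<Longrightarrow> det (symbol_minus k as bs cs \<mu> w) = 0 \<Longrightarrow> 1 < cmod w"
  shows "\<exists>C>0. \<forall>a. \<exists>x \<rho>. l2 x \<and> x \<noteq> (\<lambda>_. 0) \<and> Tpert k a as bs cs x = (\<lambda>i. \<mu> * x i)
                        \<and> \<rho> < 1 \<and> decay_bound k C \<rho> x"
proof -
  obtain K \<rho> where "0 < K" "0 < \<rho>" "\<rho> < 1"
    and decay: "\<And>s i. cmod (solution s i) \<le> K * (real (i div k) + 1) * \<rho> ^ (i div k) * norm1 s"
    using solution_decay[OF assms] by blast
  have "\<exists>x. l2 x \<and> x \<noteq> (\<lambda>_. 0) \<and> Tpert k a as bs cs x = (\<lambda>i. \<mu> * x i) \<and> decay_bound k (2 * K) \<rho> x"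
    for a
  proof (intro exI conjI)
    define s where "s = (1 :: complex, (\<mu> - as 1 - a) / bs 1)"
    have "bs 1 \<noteq> 0" using bs_nonzero k_pos by simp
    then show "Tpert k a as bs cs (solution s) = (\<lambda>i. \<mu> * solution s i)"
      unfolding s_def by (intro Tpert_solution) simp
    show "solution s \<noteq> (\<lambda>_. 0)"
      using solution_0[of s] unfolding s_def by (metis fst_conv one_neq_zero)
    have norm_s: "norm1 s = cmod (solution s 0) + cmod (solution s 1)"
      unfolding norm1_def solution_0 solution_1 ..
    show "l2 (solution s)"
      using decay[of s] \<open>0 < K\<close> \<open>0 < \<rho>\<close> \<open>\<rho> < 1\<close> k_pos norm1_nonneg[of s]
      by (intro l2_if_block_geometric[where K = "K * norm1 s"]) (simp_all add: algebra_simps)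
    show "decay_bound k (2 * K) \<rho> (solution s)"
      using decay[of s] \<open>0 < K\<close> \<open>0 < \<rho>\<close> \<open>\<rho> < 1\<close> k_pos
      by (intro decay_bound_if_block_geometric) (simp_all add: norm_s)
  qed
  then show ?thesis using \<open>0 < K\<close> \<open>\<rho> < 1\<close> by (intro exI[of _ "2 * K"]) (simp, blast)
qed

end

section \<open>Unimodular zeros of the determinant lie in the essential spectrum\<close>

definition Tminus :: "nat \<Rightarrow> complex \<Rightarrow> (nat \<Rightarrow> complex) \<Rightarrow> (nat \<Rightarrow> complex) \<Rightarrow> (nat \<Rightarrow> complex)
    \<Rightarrow> complex \<Rightarrow> (nat \<Rightarrow> complex) \<Rightarrow> nat \<Rightarrow> complex" where
  "Tminus k a as bs cs \<mu> x = (\<lambda>i. Tpert k a as bs cs x i - \<mu> * x i)"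

lemma ess_spec_Tpert_iff: "\<mu> \<in> ess_spec (Tpert k a as bs cs) \<longleftrightarrow> \<not> fredholm_l2 (Tminus k a as bs cs \<mu>)"
  unfolding ess_spec_def Tminus_def[abs_def] by simp

lemma Tminus_eq_row_residual: "r \<ge> 1 \<Longrightarrow> Tminus k a as bs cs \<mu> x r = row_residual k as bs cs \<mu> x r"
  unfolding Tminus_def by (rule Tpert_minus_eq_row_residual)

lemma Tminus_local:
  assumes "x (r - 1) = x' (r - 1)" "x r = x' r" "x (Suc r) = x' (Suc r)"
  shows "Tminus k a as bs cs \<mu> x r = Tminus k a as bs cs \<mu> x' r"
  unfolding Tminus_def Tpert_def using assms by simp

lemma Tminus_zero: "Tminus k a as bs cs \<mu> (\<lambda>_. 0) r = 0"
  unfolding Tminus_def Tpert_def by simp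

lemma row_residual_weighted:
  "row_residual k as bs cs \<mu> (\<lambda>i. f i * g i) r = f r * row_residual k as bs cs \<mu> g r
     + bs (per k r) * (f (Suc r) - f r) * g (Suc r) + cs (per k (r - 1)) * (f (r - 1) - f r) * g (r - 1)"
  unfolding row_residual_def by (simp add: algebra_simps)

lemma row_residual_diff:
  "row_residual k as bs cs \<mu> (\<lambda>i. x i - z i) r = row_residual k as bs cs \<mu> x r - row_residual k as bs cs \<mu> z r"
  unfolding row_residual_def by (simp add: algebra_simps)

text \<open>\<open>phi m = 1 / sqrt (m + 1)\<close> tends to zero and has square-summable increments, but is not
  square summable itself: multiplying a bounded solution by it gives a vector outside \<open>\<ell>\<^sup>2\<close> whose
  image under \<open>T - \<mu>\<close> is in \<open>\<ell>\<^sup>2\<close>.\<close>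

definition phi :: "nat \<Rightarrow> real" where
  "phi m = sqrt (inverse (real (Suc m)))"

lemma phi_nonneg: "0 \<le> phi m"
  unfolding phi_def by simp

lemma phi_le_one: "phi m \<le> 1"
  unfolding phi_def by (simp add: inverse_le_1_iff)

lemma phi_antimono: "m \<le> n \<Longrightarrow> phi n \<le> phi m"
  unfolding phi_def by (intro real_sqrt_le_mono) (simp add: le_imp_inverse_le)

lemma phi_tendsto_zero: "phi \<longlonglongrightarrow> 0"
proof -
  have "(\<lambda>m. sqrt (inverse (real (Suc m)))) \<longlonglongrightarrow> sqrt 0"
    by (intro tendsto_intros LIMSEQ_inverse_real_of_nat)
  then show ?thesis unfolding phi_def[abs_def] by simp
qed

lemma not_summable_phi_square: "c \<noteq> 0 \<Longrightarrow> \<not> summable (\<lambda>m. (phi m)\<^sup>2 * c)"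
proof
  assume "c \<noteq> 0" and "summable (\<lambda>m. (phi m)\<^sup>2 * c)"
  from this(2) have "summable (\<lambda>m. (phi m)\<^sup>2 * c * inverse c)"
    by (rule summable_mult2)
  then have "summable (\<lambda>m. inverse (real (Suc m)))"
    using \<open>c \<noteq> 0\<close> unfolding phi_def by (simp add: mult.assoc)
  then show False
    using summable_Suc_iff[of "\<lambda>m. inverse (real m)"] not_summable_harmonic[where 'a = real] by simp
qed

lemma summable_square_diff:
  fixes f :: "nat \<Rightarrow> real"
  assumes "\<And>i. 0 \<le> f i" "\<And>i. f i \<le> 1" and decr: "\<And>i. f (Suc i) \<le> f i"
  shows "summable (\<lambda>i. (f i - f (Suc i))\<^sup>2)"
proof (rule summableI_nonneg_bounded)
  fix n
  have "(\<Sum>i<n. (f i - f (Suc i))\<^sup>2) \<le> (\<Sum>i<n. f i - f (Suc i))"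
  proof (rule sum_mono)
    fix i
    have "0 \<le> f i - f (Suc i)" "f i - f (Suc i) \<le> 1" using assms[of i] assms(1)[of "Suc i"] by auto
    then show "(f i - f (Suc i))\<^sup>2 \<le> f i - f (Suc i)" by (simp add: power2_eq_square mult_left_le)
  qed
  also have "\<dots> = f 0 - f n" by (rule sum_lessThan_telescope')
  also have "\<dots> \<le> 1" using assms(1)[of n] assms(2)[of 0] by simp
  finally show "(\<Sum>i<n. (f i - f (Suc i))\<^sup>2) \<le> 1" .
qed simp

lemma sums_tail:
  fixes f :: "nat \<Rightarrow> real"
  assumes "summable f"
  shows "(\<lambda>r. if n \<le> r then f r else 0) sums (suminf f - (\<Sum>r<n. f r))"
proof -
  have "(\<lambda>r. f r - (if r \<in> {..<n} then f r else 0)) sums (suminf f - (\<Sum>r<n. f r))"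
    by (rule sums_diff[OF summable_sums[OF assms] sums_If_finite_set]) simp
  moreover have "(\<lambda>r. f r - (if r \<in> {..<n} then f r else 0)) = (\<lambda>r. if n \<le> r then f r else 0)"
    by (auto simp: fun_eq_iff)
  ultimately show ?thesis by simp
qed

lemma l2norm_tendsto_zero:
  fixes e :: "nat \<Rightarrow> nat \<Rightarrow> complex"
  assumes bound: "\<And>N r. (cmod (e N r))\<^sup>2 \<le> h N r" and summable: "\<And>N. summable (h N)"
    and "(\<lambda>N. suminf (h N)) \<longlonglongrightarrow> 0"
  shows "(\<lambda>N. l2norm (e N)) \<longlonglongrightarrow> 0"
proof (rule tendsto_sandwich[where f = "\<lambda>_. 0" and h = "\<lambda>N. sqrt (suminf (h N))"])
  have "summable (\<lambda>r. (cmod (e N r))\<^sup>2)" for N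
    by (rule summable_comparison_test'[where g = "h N" and N = 0]) (use bound summable in auto)
  then have "0 \<le> (\<Sum>r. (cmod (e N r))\<^sup>2)" "(\<Sum>r. (cmod (e N r))\<^sup>2) \<le> suminf (h N)" for N
    using bound summable by (auto intro: suminf_nonneg suminf_le)
  then show "\<forall>\<^sub>F N in sequentially. 0 \<le> l2norm (e N)"
    and "\<forall>\<^sub>F N in sequentially. l2norm (e N) \<le> sqrt (suminf (h N))"
    unfolding l2norm_def by simp_all
  have "(\<lambda>N. sqrt (suminf (h N))) \<longlonglongrightarrow> sqrt 0" by (intro tendsto_intros assms(3))
  then show "(\<lambda>N. sqrt (suminf (h N))) \<longlonglongrightarrow> 0" by simp
qed simp

lemma tendsto_comp_div:
  assumes "f \<longlonglongrightarrow> (0 :: real)" "k \<ge> 1"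
  shows "(\<lambda>i. f (i div k)) \<longlonglongrightarrow> 0"
proof -
  have "filterlim (\<lambda>i. i div k) sequentially sequentially"
    unfolding filterlim_at_top
  proof (intro allI eventually_sequentiallyI)
    show "M \<le> i div k" if "M * k \<le> i" for M i
      using div_le_mono[OF that, of k] \<open>k \<ge> 1\<close> by simp
  qed
  then show ?thesis using assms(1) by (rule filterlim_compose[rotated])
qed

lemma l2_imp_tendsto_zero:
  assumes "l2 x"
  shows "(\<lambda>r. cmod (x r)) \<longlonglongrightarrow> 0"
proof -
  have "(\<lambda>r. (cmod (x r))\<^sup>2) \<longlonglongrightarrow> 0" using assms unfolding l2_def by (rule summable_LIMSEQ_zero)
  then have "(\<lambda>r. sqrt ((cmod (x r))\<^sup>2)) \<longlonglongrightarrow> sqrt 0" by (intro tendsto_intros)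
  then show ?thesis by simp
qed

lemma summable_comp_mult_add:
  fixes f :: "nat \<Rightarrow> real"
  assumes "summable f" "\<And>i. 0 \<le> f i" "k \<ge> 1"
  shows "summable (\<lambda>m. f (m * k + j))"
proof (rule summableI_nonneg_bounded)
  show "0 \<le> f (m * k + j)" for m using assms(2) .
  fix n
  have "inj_on (\<lambda>m. m * k + j) {..<n}" using \<open>k \<ge> 1\<close> by (auto simp: inj_on_def)
  then have "(\<Sum>m<n. f (m * k + j)) = sum f ((\<lambda>m. m * k + j) ` {..<n})"
    by (simp add: sum.reindex)
  also have "\<dots> \<le> suminf f" by (rule sum_le_suminf) (use assms in auto)
  finally show "(\<Sum>m<n. f (m * k + j)) \<le> suminf f" .
qed

lemma square_sum_le:
  fixes p q :: real
  shows "(p + q)\<^sup>2 \<le> 2 * p\<^sup>2 + 2 * q\<^sup>2"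
proof -
  have "(p + q)\<^sup>2 = 2 * p\<^sup>2 + 2 * q\<^sup>2 - (p - q)\<^sup>2" by (simp add: power2_eq_square algebra_simps)
  then show ?thesis by simp
qed

lemma norm_add_square_le: "(cmod (p + q))\<^sup>2 \<le> 2 * (cmod p)\<^sup>2 + 2 * (cmod q)\<^sup>2"
proof -
  have "(cmod (p + q))\<^sup>2 \<le> (cmod p + cmod q)\<^sup>2"
    by (intro power_mono norm_triangle_ineq) simp
  also have "\<dots> \<le> 2 * (cmod p)\<^sup>2 + 2 * (cmod q)\<^sup>2"
    by (rule square_sum_le)
  finally show ?thesis .
qed

lemma proportional_if_wronskians_zero:
  fixes b c u0 u1 g0 g1 h0 h1 :: complex
  assumes "b \<noteq> 0" "c \<noteq> 0" "(u0, u1) \<noteq> (0, 0)" "(g0, g1) \<noteq> (0, 0)"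
    and "b * u0 * g1 - c * u1 * g0 = 0" "b * u0 * h1 - c * u1 * h0 = 0"
  obtains \<alpha> where "h0 = \<alpha> * g0" "h1 = \<alpha> * g1"
proof (cases "u0 = 0")
  case True
  then have "g0 = 0" "h0 = 0" using assms(2,3,5,6) by auto
  then show ?thesis using assms(4) by (intro that[of "h1 / g1"]) auto
next
  case False
  have g1: "g1 = c * u1 * g0 / (b * u0)" and h1: "h1 = c * u1 * h0 / (b * u0)"
    using assms(1,5,6) False by (simp_all add: field_simps)
  then have "g0 \<noteq> 0" using assms(4) by auto
  then show ?thesis using g1 h1 by (intro that[of "h0 / g0"]) (simp_all add: field_simps)
qed

context periodic_tridiag
begin

definition coef_bound :: real where
  "coef_bound = (\<Sum>j=1..k. cmod (as j) + cmod (bs j) + cmod (cs j))"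

lemma coef_bound_ge:
  "cmod (as (per k r)) \<le> coef_bound" "cmod (bs (per k r)) \<le> coef_bound" "cmod (cs (per k r)) \<le> coef_bound"
proof -
  have "per k r \<in> {1..k}" using per_bounds by simp
  then have "cmod (as (per k r)) + cmod (bs (per k r)) + cmod (cs (per k r)) \<le> coef_bound"
    unfolding coef_bound_def by (rule member_le_sum) auto
  then show "cmod (as (per k r)) \<le> coef_bound" "cmod (bs (per k r)) \<le> coef_bound" "cmod (cs (per k r)) \<le> coef_bound"
    using norm_ge_zero[of "as (per k r)"] norm_ge_zero[of "bs (per k r)"] norm_ge_zero[of "cs (per k r)"]
    by linarith+
qed

lemma coef_bound_nonneg: "0 \<le> coef_bound"
  using coef_bound_ge(1)[of 0] norm_ge_zero order_trans by blast

lemma Tminus_bound: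
  "cmod (Tminus k a as bs cs \<mu> x r)
     \<le> (coef_bound + cmod a + cmod \<mu>) * (cmod (x (r - 1)) + cmod (x r) + cmod (x (Suc r)))"
proof -
  define K where "K = coef_bound + cmod a + cmod \<mu>"
  define A where "A = as (per k r) + (if r = 0 then a else 0) - \<mu>"
  define C where "C = (if r = 0 then 0 else cs (per k (r - 1)))"
  have eq: "Tminus k a as bs cs \<mu> x r = C * x (r - 1) + A * x r + bs (per k r) * x (Suc r)"
    unfolding Tminus_def Tpert_def A_def C_def by (simp add: algebra_simps)
  have "cmod (Tminus k a as bs cs \<mu> x r)
      \<le> cmod C * cmod (x (r - 1)) + cmod A * cmod (x r) + cmod (bs (per k r)) * cmod (x (Suc r))"
    unfolding eq norm_mult[symmetric] by (rule order_trans[OF norm_triangle_ineq add_right_mono[OF norm_triangle_ineq]])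
  moreover have "cmod A \<le> K"
  proof -
    have "cmod A \<le> cmod (as (per k r) + (if r = 0 then a else 0)) + cmod \<mu>"
      unfolding A_def by (rule norm_triangle_ineq4)
    also have "\<dots> \<le> cmod (as (per k r)) + cmod a + cmod \<mu>"
      using norm_triangle_ineq[of "as (per k r)" a] by (cases "r = 0") auto
    finally show ?thesis using coef_bound_ge(1)[of r] unfolding K_def by simp
  qed
  moreover have "coef_bound \<le> K" "0 \<le> K"
    unfolding K_def using coef_bound_nonneg by simp_all
  then have "cmod C \<le> K" "cmod (bs (per k r)) \<le> K"
    unfolding C_def using coef_bound_ge(2)[of r] coef_bound_ge(3)[of "r - 1"] by auto
  ultimately show ?thesis unfolding K_def[symmetric] distrib_left
    by (smt (verit) mult_right_mono norm_ge_zero)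
qed

lemma Tminus_truncate_near:
  assumes "r = N - 1 \<or> r = N"
  shows "cmod (Tminus k a as bs cs \<mu> (\<lambda>j. if j < N then X j else 0) r)
    \<le> (coef_bound + cmod a + cmod \<mu>) * (3 * (cmod (X (N - 2)) + cmod (X (N - 1)) + cmod (X N) + cmod (X (Suc N))))"
proof -
  let ?M = "cmod (X (N - 2)) + cmod (X (N - 1)) + cmod (X N) + cmod (X (Suc N))"
  have near: "cmod (if j < N then X j else 0) \<le> ?M" if "N - 2 \<le> j" for j
  proof (cases "j < N")
    case True
    then have "j = N - 2 \<or> j = N - 1" using that by linarith
    then show ?thesis using True by auto
  next
    case False
    then show ?thesis by simp
  qed
  have "cmod (if r - 1 < N then X (r - 1) else 0) + cmod (if r < N then X r else 0)
      + cmod (if Suc r < N then X (Suc r) else 0) \<le> ?M + ?M + ?M"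
    by (intro add_mono) (rule near, use assms in linarith)+
  then have "cmod (if r - 1 < N then X (r - 1) else 0) + cmod (if r < N then X r else 0)
      + cmod (if Suc r < N then X (Suc r) else 0) \<le> 3 * ?M"
    by simp
  moreover have "0 \<le> coef_bound + cmod a + cmod \<mu>" using coef_bound_nonneg by simp
  ultimately show ?thesis
    using Tminus_bound[of a "\<lambda>j. if j < N then X j else 0" r] by (meson mult_left_mono order_trans)
qed

lemma Tminus_truncation_tendsto:
  fixes a :: complex and X :: "nat \<Rightarrow> complex"
  defines "L \<equiv> Tminus k a as bs cs \<mu>"
  assumes X_zero: "(\<lambda>r. cmod (X r)) \<longlonglongrightarrow> 0" and "l2 (L X)"
  shows "(\<lambda>N. l2norm (\<lambda>r. L (\<lambda>j. if j < N then X j else 0) r - L X r)) \<longlonglongrightarrow> 0"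
proof -
  define y where "y = L X"
  define K where "K = coef_bound + cmod a + cmod \<mu>"
  define M where "M N = cmod (X (N - 2)) + cmod (X (N - 1)) + cmod (X N) + cmod (X (Suc N))" for N
  define V where "V N = K * (3 * M N) + cmod (y (N - 1)) + cmod (y N)" for N
  define h where "h N r = (if r = N - 1 then (V N)\<^sup>2 else 0) + (if r = N then (V N)\<^sup>2 else 0)
    + (if Suc N \<le> r then (cmod (y r))\<^sup>2 else 0)" for N r
  have bound: "(cmod (L (\<lambda>j. if j < N then X j else 0) r - y r))\<^sup>2 \<le> h N r" for N r
  proof -
    consider "Suc r < N" | "Suc N \<le> r" | "r = N - 1 \<or> r = N" by linarith
    then show ?thesis
    proof cases
      case 1
      then have "L (\<lambda>j. if j < N then X j else 0) r = y r"
        unfolding L_def y_def by (intro Tminus_local) auto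
      then show ?thesis unfolding h_def by simp
    next
      case 2
      then have "L (\<lambda>j. if j < N then X j else 0) r = L (\<lambda>_. 0) r"
        unfolding L_def by (intro Tminus_local) auto
      then show ?thesis using 2 unfolding h_def L_def by (simp add: Tminus_zero)
    next
      case 3
      have "cmod (L (\<lambda>j. if j < N then X j else 0) r) \<le> K * (3 * M N)"
        unfolding L_def K_def M_def by (rule Tminus_truncate_near[OF 3])
      moreover have "cmod (y r) \<le> cmod (y (N - 1)) + cmod (y N)" using 3 by auto
      ultimately have "cmod (L (\<lambda>j. if j < N then X j else 0) r - y r) \<le> V N"
        unfolding V_def using norm_triangle_ineq4 by (smt (verit))
      then have "(cmod (L (\<lambda>j. if j < N then X j else 0) r - y r))\<^sup>2 \<le> (V N)\<^sup>2"
        by (intro power_mono) auto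
      moreover have "(V N)\<^sup>2 \<le> h N r"
        unfolding h_def using 3 by (cases "r = N") (auto simp: add_increasing)
      ultimately show ?thesis by linarith
    qed
  qed
  have y_sq: "summable (\<lambda>r. (cmod (y r))\<^sup>2)" using \<open>l2 (L X)\<close> unfolding y_def l2_def .
  define T where "T N = (\<Sum>r. (cmod (y r))\<^sup>2) - (\<Sum>r<Suc N. (cmod (y r))\<^sup>2)" for N
  have h_sums: "h N sums (2 * (V N)\<^sup>2 + T N)" for N
  proof -
    have "h N sums ((V N)\<^sup>2 + (V N)\<^sup>2 + T N)"
      unfolding h_def[abs_def] T_def using sums_single[of "N - 1" "\<lambda>_. (V N)\<^sup>2"] sums_single[of N "\<lambda>_. (V N)\<^sup>2"]
      by (intro sums_add sums_tail y_sq) simp_all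
    then show ?thesis by simp
  qed
  have y_zero: "(\<lambda>r. cmod (y r)) \<longlonglongrightarrow> 0"
    using \<open>l2 (L X)\<close> unfolding y_def by (rule l2_imp_tendsto_zero)
  have "M \<longlonglongrightarrow> 0 + 0 + 0 + 0"
    unfolding M_def[abs_def]
    by (intro tendsto_add filterlim_compose[OF X_zero filterlim_minus_const_nat_at_top] X_zero
        filterlim_compose[OF X_zero filterlim_Suc])
  then have "V \<longlonglongrightarrow> K * (3 * 0) + 0 + 0"
    unfolding V_def[abs_def]
    by (intro tendsto_add tendsto_mult tendsto_const y_zero
        filterlim_compose[OF y_zero filterlim_minus_const_nat_at_top]) simp
  moreover have "(\<lambda>N. \<Sum>r<Suc N. (cmod (y r))\<^sup>2) \<longlonglongrightarrow> (\<Sum>r. (cmod (y r))\<^sup>2)"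
    using LIMSEQ_Suc[OF summable_LIMSEQ[OF y_sq]] .
  then have "T \<longlonglongrightarrow> (\<Sum>r. (cmod (y r))\<^sup>2) - (\<Sum>r. (cmod (y r))\<^sup>2)"
    unfolding T_def[abs_def] by (intro tendsto_diff tendsto_const)
  ultimately have "(\<lambda>N. 2 * (V N)\<^sup>2 + T N) \<longlonglongrightarrow> 2 * 0\<^sup>2 + 0"
    by (intro tendsto_intros) simp_all
  then have "(\<lambda>N. suminf (h N)) \<longlonglongrightarrow> 0"
    using h_sums by (simp add: sums_iff)
  then have "(\<lambda>N. l2norm (\<lambda>r. L (\<lambda>j. if j < N then X j else 0) r - y r)) \<longlonglongrightarrow> 0"
    using h_sums by (intro l2norm_tendsto_zero[where h = h, OF bound]) (auto simp: sums_iff)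
  then show ?thesis unfolding y_def .
qed

lemma l2_Tminus_weighted_solution:
  fixes g :: "nat \<Rightarrow> complex" and \<Phi> :: "nat \<Rightarrow> real"
  assumes g_sol: "\<And>r. r \<ge> 1 \<Longrightarrow> row_residual k as bs cs \<mu> g r = 0"
    and g_bounded: "\<And>i. cmod (g i) \<le> Kg"
    and \<Phi>: "\<And>i. 0 \<le> \<Phi> i" "\<And>i. \<Phi> i \<le> 1" "\<And>i. \<Phi> (Suc i) \<le> \<Phi> i"
  shows "l2 (Tminus k a as bs cs \<mu> (\<lambda>i. of_real (\<Phi> i) * g i))"
proof -
  define d where "d i = \<Phi> i - \<Phi> (Suc i)" for i
  define B where "B = coef_bound * Kg"
  have "0 \<le> d i" for i unfolding d_def using \<Phi>(3) by simp
  have "0 \<le> Kg" using g_bounded[of 0] norm_ge_zero order_trans by blast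
  have d_sq: "summable (\<lambda>i. (d i)\<^sup>2)" unfolding d_def by (rule summable_square_diff[of \<Phi>, OF \<Phi>])
  have square_bound: "(cmod (Tminus k a as bs cs \<mu> (\<lambda>i. of_real (\<Phi> i) * g i) r))\<^sup>2
      \<le> 2 * B\<^sup>2 * (d r)\<^sup>2 + 2 * B\<^sup>2 * (d (r - 1))\<^sup>2" if "r \<ge> 1" for r
  proof -
    have "Suc (r - 1) = r" using that by simp
    then have eq: "Tminus k a as bs cs \<mu> (\<lambda>i. of_real (\<Phi> i) * g i) r
        = - (bs (per k r) * of_real (d r) * g (Suc r)) + cs (per k (r - 1)) * of_real (d (r - 1)) * g (r - 1)"
      using that g_sol[OF that] unfolding Tminus_eq_row_residual[OF that] row_residual_weighted d_def
      by (simp add: algebra_simps)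
    have P: "cmod (bs (per k r) * of_real (d r) * g (Suc r)) \<le> B * d r" for r
    proof -
      have "cmod (bs (per k r)) * d r * cmod (g (Suc r)) \<le> coef_bound * d r * Kg"
        using coef_bound_ge(2)[of r] g_bounded[of "Suc r"] \<open>0 \<le> d r\<close> coef_bound_nonneg
        by (intro mult_mono) auto
      then show ?thesis unfolding B_def norm_mult using \<open>0 \<le> d r\<close> by (simp add: algebra_simps)
    qed
    have Q: "cmod (cs (per k r) * of_real (d r) * g r) \<le> B * d r" for r
    proof -
      have "cmod (cs (per k r)) * d r * cmod (g r) \<le> coef_bound * d r * Kg"
        using coef_bound_ge(3)[of r] g_bounded[of r] \<open>0 \<le> d r\<close> coef_bound_nonneg
        by (intro mult_mono) auto
      then show ?thesis unfolding B_def norm_mult using \<open>0 \<le> d r\<close> by (simp add: algebra_simps)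
    qed
    have "(cmod (Tminus k a as bs cs \<mu> (\<lambda>i. of_real (\<Phi> i) * g i) r))\<^sup>2
        \<le> 2 * (cmod (bs (per k r) * of_real (d r) * g (Suc r)))\<^sup>2
          + 2 * (cmod (cs (per k (r - 1)) * of_real (d (r - 1)) * g (r - 1)))\<^sup>2"
      unfolding eq using norm_add_square_le[of "- (bs (per k r) * of_real (d r) * g (Suc r))"] by simp
    also have "\<dots> \<le> 2 * (B * d r)\<^sup>2 + 2 * (B * d (r - 1))\<^sup>2"
      using P[of r] Q[of "r - 1"] \<open>Suc (r - 1) = r\<close> by (intro add_mono mult_left_mono power_mono) auto
    finally show ?thesis by (simp add: power_mult_distrib)
  qed
  have "summable (\<lambda>r. 2 * B\<^sup>2 * (d r)\<^sup>2 + 2 * B\<^sup>2 * (d (r - 1))\<^sup>2)"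
  proof (intro summable_add summable_mult d_sq)
    have "summable (\<lambda>r. (d (Suc r - 1))\<^sup>2)" using d_sq by simp
    then show "summable (\<lambda>r. (d (r - 1))\<^sup>2)" by (subst summable_Suc_iff[symmetric])
  qed
  then show ?thesis
    unfolding l2_def
  proof (rule summable_comparison_test'[where N = 1])
    fix r :: nat
    assume "1 \<le> r"
    from square_bound[OF this]
    show "norm ((cmod (Tminus k a as bs cs \<mu> (\<lambda>i. of_real (\<Phi> i) * g i) r))\<^sup>2)
        \<le> 2 * B\<^sup>2 * (d r)\<^sup>2 + 2 * B\<^sup>2 * (d (r - 1))\<^sup>2" by simp
  qed
qed

definition wronskian :: "(nat \<Rightarrow> complex) \<Rightarrow> (nat \<Rightarrow> complex) \<Rightarrow> nat \<Rightarrow> complex" where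
  "wronskian u z r = bs (per k r) * u r * z (Suc r) - cs (per k r) * u (Suc r) * z r"

lemma wronskian_const:
  assumes "\<And>r. r \<ge> 1 \<Longrightarrow> row_residual k as bs cs \<mu> z r = 0"
    and "\<And>r. r \<ge> 1 \<Longrightarrow> row_residual k as cs bs \<mu> u r = 0"
  shows "wronskian u z r = wronskian u z 0"
proof (induction r)
  case (Suc r)
  have "wronskian u z (Suc r) - wronskian u z r
      = u (Suc r) * row_residual k as bs cs \<mu> z (Suc r) - z (Suc r) * row_residual k as cs bs \<mu> u (Suc r)"
    unfolding wronskian_def row_residual_def by (simp add: algebra_simps)
  then show ?case using Suc assms by simp
qed simp

lemma wronskian_bound:
  assumes "\<And>i. cmod (u i) \<le> Ku"
  shows "cmod (wronskian u z r) \<le> coef_bound * Ku * (cmod (z (Suc r)) + cmod (z r))"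
proof -
  have "0 \<le> Ku" using assms[of 0] norm_ge_zero order_trans by blast
  have "cmod (wronskian u z r) \<le> cmod (bs (per k r)) * cmod (u r) * cmod (z (Suc r))
      + cmod (cs (per k r)) * cmod (u (Suc r)) * cmod (z r)"
    unfolding wronskian_def norm_mult[symmetric] by (rule norm_triangle_ineq4)
  also have "\<dots> \<le> coef_bound * Ku * cmod (z (Suc r)) + coef_bound * Ku * cmod (z r)"
    using coef_bound_ge(2,3)[of r] assms coef_bound_nonneg \<open>0 \<le> Ku\<close>
    by (intro add_mono mult_right_mono mult_mono) auto
  finally show ?thesis by (simp add: algebra_simps)
qed

lemma summable_wronskian_square:
  assumes "\<And>i. cmod (u i) \<le> Ku" "l2 z"
  shows "summable (\<lambda>r. (cmod (wronskian u z r))\<^sup>2)"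
proof -
  have z_sq: "summable (\<lambda>r. (cmod (z r))\<^sup>2)" using assms(2) unfolding l2_def .
  have W_sq: "(cmod (wronskian u z r))\<^sup>2
      \<le> 2 * (coef_bound * Ku)\<^sup>2 * (cmod (z (Suc r)))\<^sup>2 + 2 * (coef_bound * Ku)\<^sup>2 * (cmod (z r))\<^sup>2" for r
  proof -
    have "(cmod (wronskian u z r))\<^sup>2 \<le> (coef_bound * Ku * cmod (z (Suc r)) + coef_bound * Ku * cmod (z r))\<^sup>2"
      using wronskian_bound[where u = u and Ku = Ku and z = z, OF assms(1), of r]
      by (intro power_mono) (simp_all add: algebra_simps)
    also have "\<dots> \<le> 2 * (coef_bound * Ku * cmod (z (Suc r)))\<^sup>2 + 2 * (coef_bound * Ku * cmod (z r))\<^sup>2"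
      by (rule square_sum_le)
    finally show ?thesis by (simp add: power_mult_distrib)
  qed
  have "summable (\<lambda>r. 2 * (coef_bound * Ku)\<^sup>2 * (cmod (z (Suc r)))\<^sup>2 + 2 * (coef_bound * Ku)\<^sup>2 * (cmod (z r))\<^sup>2)"
    using z_sq summable_Suc_iff[of "\<lambda>r. (cmod (z r))\<^sup>2"] by (intro summable_add summable_mult) auto
  then show ?thesis
    by (rule summable_comparison_test'[where N = 0]) (use W_sq in simp)
qed

lemma solution_zero_if_initial_zero:
  assumes "\<And>r. r \<ge> 1 \<Longrightarrow> row_residual k as bs cs \<mu> x r = 0" "x 0 = 0" "x 1 = 0"
  shows "x i = 0"
proof -
  have "x = solution (pair_comb 0 0 (0, 0) (0, 0))"
    using solution_unique[OF assms(1)] assms(2,3) by (simp add: pair_comb_def)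
  then show ?thesis by (simp add: solution_pair_comb)
qed

context
  fixes g u :: "nat \<Rightarrow> complex" and Kg Ku \<gamma> :: real and j0 :: nat
  assumes g_sol: "\<And>r. r \<ge> 1 \<Longrightarrow> row_residual k as bs cs \<mu> g r = 0"
    and u_sol: "\<And>r. r \<ge> 1 \<Longrightarrow> row_residual k as cs bs \<mu> u r = 0"
    and g_bounded: "\<And>i. cmod (g i) \<le> Kg" and u_bounded: "\<And>i. cmod (u i) \<le> Ku"
    and g_size: "\<And>m. cmod (g (m * k + j0)) = \<gamma>" and "0 < \<gamma>" "j0 < k"
    and u_initial: "(u 0, u 1) \<noteq> (0, 0)"
begin

lemma g_initial_nonzero: "(g 0, g 1) \<noteq> (0, 0)"
proof
  assume "(g 0, g 1) = (0, 0)"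
  then have "g j0 = 0" using solution_zero_if_initial_zero[OF g_sol] by simp
  then show False using g_size[of 0] \<open>0 < \<gamma>\<close> by simp
qed

lemma phi_div:
  "0 \<le> phi (i div k)" "phi (i div k) \<le> 1" "phi (Suc i div k) \<le> phi (i div k)"
  "(\<lambda>i. phi (i div k)) \<longlonglongrightarrow> 0"
  by (simp_all add: phi_nonneg phi_le_one phi_antimono div_le_mono tendsto_comp_div[OF phi_tendsto_zero k_pos])

context
  fixes h :: "nat \<Rightarrow> complex"
  assumes h_sol: "\<And>r. r \<ge> 1 \<Longrightarrow> row_residual k as bs cs \<mu> h r = 0"
    and l2_sum: "l2 (\<lambda>i. of_real (phi (i div k)) * g i + h i)"
begin

lemma wronskian_weighted_sum:
  "wronskian u (\<lambda>i. of_real (phi (i div k)) * g i + h i) r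
     = of_real (phi (r div k)) * wronskian u g 0
       - bs (per k r) * u r * of_real (phi (r div k) - phi (Suc r div k)) * g (Suc r) + wronskian u h 0"
proof -
  have "wronskian u (\<lambda>i. of_real (phi (i div k)) * g i + h i) r
     = of_real (phi (r div k)) * wronskian u g r
       - bs (per k r) * u r * of_real (phi (r div k) - phi (Suc r div k)) * g (Suc r) + wronskian u h r"
    unfolding wronskian_def by (simp add: algebra_simps)
  then show ?thesis
    using wronskian_const[OF g_sol u_sol, of r] wronskian_const[OF h_sol u_sol, of r] by simp
qed

lemma weighted_correction_bound:
  "cmod (bs (per k r) * u r * of_real (phi (r div k) - phi (Suc r div k)) * g (Suc r))
     \<le> coef_bound * Ku * Kg * (phi (r div k) - phi (Suc r div k))"
proof -
  have "0 \<le> Ku" using u_bounded[of 0] norm_ge_zero order_trans by blast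
  have "0 \<le> phi (r div k) - phi (Suc r div k)" using phi_div(3)[of r] by simp
  then have "cmod (bs (per k r)) * cmod (u r) * (phi (r div k) - phi (Suc r div k)) * cmod (g (Suc r))
      \<le> coef_bound * Ku * (phi (r div k) - phi (Suc r div k)) * Kg"
    using coef_bound_ge(2)[of r] u_bounded[of r] g_bounded[of "Suc r"] coef_bound_nonneg \<open>0 \<le> Ku\<close>
    by (intro mult_mono mult_nonneg_nonneg) auto
  then show ?thesis
    unfolding norm_mult norm_of_real using \<open>0 \<le> phi (r div k) - phi (Suc r div k)\<close>
    by (simp add: algebra_simps)
qed

text \<open>The Wronskian with \<open>u\<close> of an \<open>\<ell>\<^sup>2\<close> vector tends to zero, while the weighted part of the
  sum contributes a vanishing term: so the solution part \<open>h\<close> has zero Wronskian with \<open>u\<close>.\<close>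

lemma wronskian_remainder_zero: "wronskian u h 0 = 0"
proof -
  let ?x = "\<lambda>i. of_real (phi (i div k)) * g i + h i"
  let ?\<beta> = "\<lambda>r. bs (per k r) * u r * of_real (phi (r div k) - phi (Suc r div k)) * g (Suc r)"
  have x_zero: "(\<lambda>r. cmod (?x r)) \<longlonglongrightarrow> 0" by (rule l2_imp_tendsto_zero[OF l2_sum])
  have W_zero: "(\<lambda>r. wronskian u ?x r) \<longlonglongrightarrow> 0"
  proof (rule Lim_null_comparison)
    show "\<forall>\<^sub>F r in sequentially. norm (wronskian u ?x r) \<le> coef_bound * Ku * (cmod (?x (Suc r)) + cmod (?x r))"
      by (intro always_eventually allI) (rule wronskian_bound[where u = u and Ku = Ku and z = ?x, OF u_bounded])
    have "(\<lambda>r. coef_bound * Ku * (cmod (?x (Suc r)) + cmod (?x r))) \<longlonglongrightarrow> coef_bound * Ku * (0 + 0)"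
      by (intro tendsto_mult tendsto_add tendsto_const x_zero filterlim_compose[OF x_zero filterlim_Suc])
    then show "(\<lambda>r. coef_bound * Ku * (cmod (?x (Suc r)) + cmod (?x r))) \<longlonglongrightarrow> 0" by simp
  qed
  have \<beta>_zero: "?\<beta> \<longlonglongrightarrow> 0"
  proof (rule Lim_null_comparison)
    show "\<forall>\<^sub>F r in sequentially. norm (?\<beta> r) \<le> coef_bound * Ku * Kg * (phi (r div k) - phi (Suc r div k))"
      by (intro always_eventually allI) (rule weighted_correction_bound)
    have "(\<lambda>r. coef_bound * Ku * Kg * (phi (r div k) - phi (Suc r div k))) \<longlonglongrightarrow> coef_bound * Ku * Kg * (0 - 0)"
      by (intro tendsto_mult tendsto_diff tendsto_const phi_div(4)
          filterlim_compose[OF phi_div(4) filterlim_Suc])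
    then show "(\<lambda>r. coef_bound * Ku * Kg * (phi (r div k) - phi (Suc r div k))) \<longlonglongrightarrow> 0" by simp
  qed
  have "(\<lambda>r. wronskian u ?x r - of_real (phi (r div k)) * wronskian u g 0 + ?\<beta> r)
          \<longlonglongrightarrow> 0 - of_real 0 * wronskian u g 0 + 0"
    by (intro tendsto_add tendsto_diff tendsto_mult tendsto_of_real tendsto_const W_zero \<beta>_zero phi_div(4))
  moreover have "(\<lambda>r. wronskian u ?x r - of_real (phi (r div k)) * wronskian u g 0 + ?\<beta> r) = (\<lambda>r. wronskian u h 0)"
    by (simp add: wronskian_weighted_sum)
  ultimately show ?thesis by (simp add: LIMSEQ_const_iff)
qed

lemma wronskian_solution_zero: "wronskian u g 0 = 0"
proof (rule ccontr)
  assume "wronskian u g 0 \<noteq> 0"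
  let ?x = "\<lambda>i. of_real (phi (i div k)) * g i + h i"
  let ?\<beta> = "\<lambda>r. bs (per k r) * u r * of_real (phi (r div k) - phi (Suc r div k)) * g (Suc r)"
  let ?c = "(cmod (wronskian u g 0))\<^sup>2"
  have c_bound: "(phi (r div k))\<^sup>2 * ?c \<le> 2 * (cmod (wronskian u ?x r))\<^sup>2 + 2 * (cmod (?\<beta> r))\<^sup>2" for r
  proof -
    have "of_real (phi (r div k)) * wronskian u g 0 = wronskian u ?x r + ?\<beta> r"
      using wronskian_weighted_sum[of r] wronskian_remainder_zero by simp
    moreover have "cmod (of_real (phi (r div k)) * wronskian u g 0) = phi (r div k) * cmod (wronskian u g 0)"
      by (simp add: norm_mult phi_nonneg)
    ultimately have "(phi (r div k))\<^sup>2 * ?c = (cmod (wronskian u ?x r + ?\<beta> r))\<^sup>2"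
      by (simp add: power_mult_distrib)
    then show ?thesis using norm_add_square_le by simp
  qed
  have "summable (\<lambda>r. 2 * (cmod (wronskian u ?x r))\<^sup>2 + 2 * (cmod (?\<beta> r))\<^sup>2)"
  proof (intro summable_add summable_mult)
    show "summable (\<lambda>r. (cmod (wronskian u ?x r))\<^sup>2)"
      by (rule summable_wronskian_square[OF u_bounded l2_sum])
    have "summable (\<lambda>r. (phi (r div k) - phi (Suc r div k))\<^sup>2)"
      by (rule summable_square_diff[of "\<lambda>r. phi (r div k)", OF phi_div(1-3)])
    have \<beta>_sq: "(cmod (?\<beta> r))\<^sup>2 \<le> (coef_bound * Ku * Kg)\<^sup>2 * (phi (r div k) - phi (Suc r div k))\<^sup>2" for r
      unfolding power_mult_distrib[symmetric] by (intro power_mono weighted_correction_bound) simp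
    from \<open>summable (\<lambda>r. (phi (r div k) - phi (Suc r div k))\<^sup>2)\<close>
    have "summable (\<lambda>r. (coef_bound * Ku * Kg)\<^sup>2 * (phi (r div k) - phi (Suc r div k))\<^sup>2)"
      by (rule summable_mult)
    then show "summable (\<lambda>r. (cmod (?\<beta> r))\<^sup>2)"
      by (rule summable_comparison_test'[where N = 0]) (use \<beta>_sq in simp)
  qed
  then have "summable (\<lambda>r. (phi (r div k))\<^sup>2 * ?c)"
    by (rule summable_comparison_test'[where N = 0]) (use c_bound in simp)
  then have "summable (\<lambda>m. (phi ((m * k + 0) div k))\<^sup>2 * ?c)"
    using k_pos by (intro summable_comp_mult_add) auto
  then show False
    using not_summable_phi_square[of ?c] \<open>wronskian u g 0 \<noteq> 0\<close> k_pos by simp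
qed

text \<open>With both Wronskians zero, \<open>h\<close> is a multiple \<open>\<alpha> g\<close> of \<open>g\<close>, and along the residue class
  of \<open>j0\<close> the sum has modulus \<open>|phi m + \<alpha>| \<gamma>\<close>, which is square summable for no \<open>\<alpha>\<close>.\<close>

lemma weighted_solution_sum_absurd: False
proof -
  let ?x = "\<lambda>i. of_real (phi (i div k)) * g i + h i"
  have "per k 0 = 1" unfolding per_def by simp
  then have b1: "bs 1 \<noteq> 0" and c1: "cs 1 \<noteq> 0" using bs_per_nonzero[of 0] cs_per_nonzero[of 0] by simp_all
  have "bs 1 * u 0 * g 1 - cs 1 * u 1 * g 0 = 0" "bs 1 * u 0 * h 1 - cs 1 * u 1 * h 0 = 0"
    using wronskian_solution_zero wronskian_remainder_zero \<open>per k 0 = 1\<close> unfolding wronskian_def by simp_all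
  then obtain \<alpha> where "h 0 = \<alpha> * g 0" "h 1 = \<alpha> * g 1"
    using proportional_if_wronskians_zero[OF b1 c1 u_initial g_initial_nonzero] by blast
  then have "h = solution (pair_comb \<alpha> 0 (g 0, g 1) (g 0, g 1))"
    using solution_unique[OF h_sol] by (simp add: pair_comb_def)
  then have h: "h i = \<alpha> * g i" for i
    using solution_unique[OF g_sol] by (simp add: solution_pair_comb)
  have x_j0: "(cmod (?x (m * k + j0)))\<^sup>2 = (cmod (of_real (phi m) + \<alpha>))\<^sup>2 * \<gamma>\<^sup>2" for m
  proof -
    have "(m * k + j0) div k = m" using \<open>j0 < k\<close> by simp
    then have "?x (m * k + j0) = (of_real (phi m) + \<alpha>) * g (m * k + j0)"
      by (simp add: h distrib_right)
    then show ?thesis using g_size[of m] by (simp add: norm_mult power_mult_distrib)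
  qed
  have "summable (\<lambda>m. (cmod (?x (m * k + j0)))\<^sup>2)"
    using l2_sum k_pos unfolding l2_def by (intro summable_comp_mult_add) auto
  then have sq_summable: "summable (\<lambda>m. (cmod (of_real (phi m) + \<alpha>))\<^sup>2 * \<gamma>\<^sup>2)"
    by (simp only: x_j0)
  then have "(\<lambda>m. (cmod (of_real (phi m) + \<alpha>))\<^sup>2 * \<gamma>\<^sup>2 / \<gamma>\<^sup>2) \<longlonglongrightarrow> 0 / \<gamma>\<^sup>2"
    by (intro tendsto_divide summable_LIMSEQ_zero tendsto_const) (use \<open>0 < \<gamma>\<close> in auto)
  then have "(\<lambda>m. sqrt ((cmod (of_real (phi m) + \<alpha>))\<^sup>2)) \<longlonglongrightarrow> sqrt 0"
    using \<open>0 < \<gamma>\<close> by (intro tendsto_intros) simp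
  then have "(\<lambda>m. of_real (phi m) + \<alpha>) \<longlonglongrightarrow> 0"
    by (simp add: tendsto_norm_zero_iff)
  moreover have "(\<lambda>m. of_real (phi m) + \<alpha>) \<longlonglongrightarrow> of_real 0 + \<alpha>"
    by (intro tendsto_intros phi_tendsto_zero)
  ultimately have "\<alpha> = 0" using LIMSEQ_unique by (metis add_0 of_real_0)
  then show False
    using sq_summable not_summable_phi_square[of "\<gamma>\<^sup>2"] \<open>0 < \<gamma>\<close> phi_nonneg by simp
qed

end

lemma not_fredholm_Tminus: "\<not> fredholm_l2 (Tminus k a as bs cs \<mu>)"
proof
  define X where "X i = of_real (phi (i div k)) * g i" for i
  let ?L = "Tminus k a as bs cs \<mu>"
  assume "fredholm_l2 ?L"
  then have closed_range: "\<exists>x. l2 x \<and> ?L x = y"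
    if "\<forall>n. l2 (xs n)" "l2 y" "(\<lambda>n. l2norm (\<lambda>i. ?L (xs n) i - y i)) \<longlonglongrightarrow> 0" for xs y
    using that unfolding fredholm_l2_def by blast
  have "l2 (?L X)"
    unfolding X_def by (rule l2_Tminus_weighted_solution[where g = g and \<Phi> = "\<lambda>i. phi (i div k)", OF g_sol g_bounded phi_div(1-3)])
  moreover have "(\<lambda>r. cmod (X r)) \<longlonglongrightarrow> 0"
  proof (rule Lim_null_comparison)
    have "norm (cmod (X r)) \<le> Kg * phi (r div k)" for r
      using mult_left_mono[OF g_bounded[of r] phi_nonneg[of "r div k"]]
      unfolding X_def by (simp add: norm_mult mult.commute phi_nonneg)
    then show "\<forall>\<^sub>F r in sequentially. norm (cmod (X r)) \<le> Kg * phi (r div k)"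
      by simp
    show "(\<lambda>r. Kg * phi (r div k)) \<longlonglongrightarrow> 0"
      using tendsto_mult_left[OF phi_div(4), of Kg] by simp
  qed
  moreover have "\<forall>N. l2 (\<lambda>j. if j < N then X j else 0)"
  proof
    fix N
    show "l2 (\<lambda>j. if j < N then X j else 0)"
      unfolding l2_def by (rule summable_finite[of "{..<N}"]) auto
  qed
  ultimately obtain x where "l2 x" "?L x = ?L X"
    using closed_range[OF _ _ Tminus_truncation_tendsto] by blast
  define h where "h i = x i - X i" for i
  have "row_residual k as bs cs \<mu> h r = 0" if "r \<ge> 1" for r
  proof -
    have "row_residual k as bs cs \<mu> x r = ?L x r" by (rule Tminus_eq_row_residual[OF that, symmetric])
    also have "\<dots> = ?L X r" using \<open>?L x = ?L X\<close> by simp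
    also have "\<dots> = row_residual k as bs cs \<mu> X r" by (rule Tminus_eq_row_residual[OF that])
    finally show ?thesis unfolding h_def[abs_def] row_residual_diff by simp
  qed
  moreover have "(\<lambda>i. of_real (phi (i div k)) * g i + h i) = x"
    unfolding h_def X_def by simp
  ultimately show False
    using weighted_solution_sum_absurd \<open>l2 x\<close> by blast
qed

end

lemma ess_spec_if_unimodular_zero:
  assumes "cmod w = 1" "det (symbol_minus k as bs cs \<mu> w) = 0"
  shows "\<mu> \<in> ess_spec (Tpert k a as bs cs)"
proof -
  interpret swapped: periodic_tridiag k as cs bs \<mu>
    using k_pos bs_nonzero cs_nonzero by unfold_locales auto
  have "w \<noteq> 0" "cmod (1 / w) = 1" using assms(1) by (auto simp: norm_divide)
  have component: "\<exists>j<k. v $ j \<noteq> 0" if "v \<in> carrier_vec k" "v \<noteq> 0\<^sub>v k" for v :: "complex vec"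
    using that by (metis carrier_vecD eq_vecI index_zero_vec(1,2))
  have bounded: "cmod (bloch_ext k \<nu> v i) \<le> (\<Sum>j<k. cmod (v $ j))" if "cmod \<nu> = 1" for \<nu> v i
    unfolding norm_bloch_ext[OF that] using k_pos by (intro member_le_sum) auto
  obtain v where v: "v \<in> carrier_vec k" "v \<noteq> 0\<^sub>v k" "symbol_minus k as bs cs \<mu> (1 / (1 / w)) *\<^sub>v v = 0\<^sub>v k"
    using det_0_iff_vec_prod_zero[OF symbol_minus_carrier] assms(2) \<open>w \<noteq> 0\<close> by auto
  then obtain j0 where "j0 < k" "v $ j0 \<noteq> 0" using component by blast
  have "det (symbol_minus k as cs bs \<mu> (1 / w)) = 0"
    using det_symbol_minus_swap[of "1 / w"] assms(2) \<open>w \<noteq> 0\<close> by simp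
  then obtain v' where v': "v' \<in> carrier_vec k" "v' \<noteq> 0\<^sub>v k" "symbol_minus k as cs bs \<mu> (1 / w) *\<^sub>v v' = 0\<^sub>v k"
    using det_0_iff_vec_prod_zero[OF symbol_minus_carrier] by blast
  then obtain j1 where "j1 < k" "v' $ j1 \<noteq> 0" using component by blast
  define g where "g = bloch_ext k (1 / w) v"
  define u where "u = bloch_ext k w v'"
  have g_sol: "row_residual k as bs cs \<mu> g r = 0" if "r \<ge> 1" for r
    unfolding g_def using row_residual_bloch_ext[OF k_pos _ v(1,3)] \<open>w \<noteq> 0\<close> that by simp
  have u_sol: "row_residual k as cs bs \<mu> u r = 0" if "r \<ge> 1" for r
    unfolding u_def using row_residual_bloch_ext[OF k_pos \<open>w \<noteq> 0\<close> v'(1,3)] that by simp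
  have "cmod (g (m * k + j0)) = cmod (v $ j0)" for m
    unfolding g_def norm_bloch_ext[OF \<open>cmod (1 / w) = 1\<close>] using \<open>j0 < k\<close> by simp
  moreover have "(u 0, u 1) \<noteq> (0, 0)"
  proof
    assume "(u 0, u 1) = (0, 0)"
    then have "u j1 = 0" using swapped.solution_zero_if_initial_zero[OF u_sol] by simp
    then show False using \<open>j1 < k\<close> \<open>v' $ j1 \<noteq> 0\<close> unfolding u_def bloch_ext_def by simp
  qed
  ultimately have "\<not> fredholm_l2 (Tminus k a as bs cs \<mu>)"
    using \<open>j0 < k\<close> \<open>v $ j0 \<noteq> 0\<close> bounded[OF \<open>cmod (1 / w) = 1\<close>, of v] bounded[OF \<open>cmod w = 1\<close>, of v']
    by (intro not_fredholm_Tminus[OF g_sol u_sol, where Kg = "\<Sum>j<k. cmod (v $ j)" and Ku = "\<Sum>j<k. cmod (v' $ j)"])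
       (auto simp: g_def u_def)
  then show ?thesis by (simp add: ess_spec_Tpert_iff)
qed

end

section \<open>Winding number and eigenvectors\<close>

lemma total_wind_eq_winding_number:
  assumes "\<And>z. z \<noteq> 0 \<Longrightarrow> det (symbol_minus k as bs cs \<mu> z) = D z"
  shows "total_wind k as bs cs \<mu> = winding_number (D \<circ> circlepath 0 1) 0"
proof -
  have "(\<lambda>t. det (symbol k as bs cs (exp (2 * of_real pi * \<i> * of_real t)) - \<mu> \<cdot>\<^sub>m 1\<^sub>m k)) = D \<circ> circlepath 0 1"
    using assms by (auto simp: circlepath symbol_minus_def fun_eq_iff)
  then show ?thesis unfolding total_wind_def by simp
qed

text \<open>Swapping \<open>b\<close> and \<open>c\<close> transposes the symbol and replaces \<open>z\<close> by \<open>1/z\<close>, which reverses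
  the determinant curve.\<close>

lemma total_wind_swap:
  assumes nondeg: "\<And>z. cmod z = 1 \<Longrightarrow> det (symbol_minus k as bs cs \<mu> z) \<noteq> 0"
  shows "total_wind k as cs bs \<mu> = - total_wind k as bs cs \<mu>"
proof -
  obtain A B C where ABC: "\<And>z. z \<noteq> 0 \<Longrightarrow> det (symbol_minus k as bs cs \<mu> z) = A / z + B + C * z"
    using laurent1_det_symbol_minus unfolding laurent1_def by blast
  define D where "D z = A / z + B + C * z" for z
  let ?\<gamma> = "D \<circ> circlepath 0 1"
  have "total_wind k as bs cs \<mu> = winding_number ?\<gamma> 0"
    using ABC by (intro total_wind_eq_winding_number) (simp add: D_def)
  moreover have "total_wind k as cs bs \<mu> = winding_number ((\<lambda>z. D (1 / z)) \<circ> circlepath 0 1) 0"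
  proof (rule total_wind_eq_winding_number)
    show "det (symbol_minus k as cs bs \<mu> z) = D (1 / z)" if "z \<noteq> 0" for z
      using det_symbol_minus_swap[OF that, of k as cs bs \<mu>] ABC[of "1 / z"] that by (simp add: D_def)
  qed
  moreover have "(\<lambda>z. D (1 / z)) \<circ> circlepath 0 1 = reversepath ?\<gamma>"
  proof -
    have "circlepath 0 1 (1 - t) = 1 / circlepath 0 1 t" for t
    proof -
      have "circlepath 0 1 (1 - t) = exp (2 * of_real pi * \<i> - 2 * of_real pi * \<i> * of_real t)"
        by (simp add: circlepath right_diff_distrib)
      also have "\<dots> = exp (2 * of_real pi * \<i>) / exp (2 * of_real pi * \<i> * of_real t)"
        by (rule exp_diff)
      finally show ?thesis by (simp add: circlepath)
    qed
    then show ?thesis by (simp add: fun_eq_iff reversepath_def)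
  qed
  moreover have "path ?\<gamma>"
    unfolding D_def by (intro path_continuous_image path_circlepath continuous_intros) auto
  moreover have "0 \<notin> path_image ?\<gamma>"
  proof
    assume "0 \<in> path_image ?\<gamma>"
    then obtain z where "cmod z = 1" "D z = 0" by (auto simp: path_image_compose)
    moreover from \<open>cmod z = 1\<close> have "z \<noteq> 0" by auto
    ultimately show False using nondeg[of z] ABC[of z] unfolding D_def by simp
  qed
  ultimately show ?thesis by (simp add: winding_number_reversepath)
qed

context periodic_tridiag
begin

lemma decaying_eigenvector_if_winding_neg:
  assumes nondeg: "\<And>z. cmod z = 1 \<Longrightarrow> det (symbol_minus k as bs cs \<mu> z) \<noteq> 0"
    and "Re (total_wind k as bs cs \<mu>) < 0"
  shows "\<exists>C>0. \<forall>a. \<exists>x \<rho>. l2 x \<and> x \<noteq> (\<lambda>_. 0) \<and> Tpert k a as bs cs x = (\<lambda>i. \<mu> * x i)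
                        \<and> \<rho> < 1 \<and> decay_bound k C \<rho> x"
proof (rule decaying_eigenvector)
  obtain A B C where ABC: "\<And>z. z \<noteq> 0 \<Longrightarrow> det (symbol_minus k as bs cs \<mu> z) = A / z + B + C * z"
    using laurent1_det_symbol_minus unfolding laurent1_def by blast
  have "total_wind k as bs cs \<mu> = winding_number ((\<lambda>z. A / z + B + C * z) \<circ> circlepath 0 1) 0"
    using ABC by (rule total_wind_eq_winding_number)
  moreover have "A / z + B + C * z \<noteq> 0" if "cmod z = 1" for z
  proof -
    from that have "z \<noteq> 0" by auto
    then show ?thesis using nondeg[OF that] ABC[of z] by simp
  qed
  ultimately show "1 < cmod w" if "w \<noteq> 0" "det (symbol_minus k as bs cs \<mu> w) = 0" for w
    using laurent_zeros_outside_if_winding_neg[of A B C w] \<open>Re (total_wind k as bs cs \<mu>) < 0\<close> ABC that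
    by auto
qed

lemma decaying_left_eigenvector_if_winding_pos:
  assumes nondeg: "\<And>z. cmod z = 1 \<Longrightarrow> det (symbol_minus k as bs cs \<mu> z) \<noteq> 0"
    and "Re (total_wind k as bs cs \<mu>) > 0"
  shows "\<exists>C>0. \<forall>a. \<exists>y \<rho>. l2 y \<and> y \<noteq> (\<lambda>_. 0) \<and> Tpert_tr k a as bs cs y = (\<lambda>i. \<mu> * y i)
                        \<and> \<rho> < 1 \<and> decay_bound k C \<rho> y"
proof -
  interpret swapped: periodic_tridiag k as cs bs \<mu>
    using k_pos bs_nonzero cs_nonzero by unfold_locales auto
  have "det (symbol_minus k as cs bs \<mu> z) \<noteq> 0" if "cmod z = 1" for z
  proof -
    have "z \<noteq> 0" "cmod (1 / z) = 1" using that by (auto simp: norm_divide)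
    then show ?thesis using nondeg det_symbol_minus_swap[of z k as cs bs \<mu>] by simp
  qed
  moreover have "Re (total_wind k as cs bs \<mu>) < 0"
    using total_wind_swap[OF nondeg] assms(2) by simp
  ultimately show ?thesis
    unfolding Tpert_tr_eq_Tpert_swap by (rule swapped.decaying_eigenvector_if_winding_neg)
qed

end

theorem theorem4p2:
  fixes k :: nat and as bs cs :: "nat \<Rightarrow> complex" and \<mu> :: complex
  assumes "k \<ge> 1"
    and "(\<Prod>j=1..k. cs j) \<noteq> 0" and "(\<Prod>j=1..k. bs j) \<noteq> 0"
  shows "(Re (total_wind k as bs cs \<mu>) < 0 \<longrightarrow>
           (\<exists>C>0. \<forall>a. \<mu> \<notin> ess_spec (Tpert k a as bs cs) \<longrightarrow>
              (\<exists>x \<rho>. l2 x \<and> x \<noteq> (\<lambda>_. 0) \<and> Tpert k a as bs cs x = (\<lambda>i. \<mu> * x i)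
                     \<and> \<rho> < 1 \<and> decay_bound k C \<rho> x)))
       \<and> (Re (total_wind k as bs cs \<mu>) > 0 \<longrightarrow>
           (\<exists>C>0. \<forall>a. \<mu> \<notin> ess_spec (Tpert k a as bs cs) \<longrightarrow>
              (\<exists>y \<rho>. l2 y \<and> y \<noteq> (\<lambda>_. 0) \<and> Tpert_tr k a as bs cs y = (\<lambda>i. \<mu> * y i)
                     \<and> \<rho> < 1 \<and> decay_bound k C \<rho> y)))"
proof -
  interpret periodic_tridiag k as bs cs \<mu>
    using assms by unfold_locales auto
  show ?thesis
  proof (cases "\<exists>w. cmod w = 1 \<and> det (symbol_minus k as bs cs \<mu> w) = 0")
    case True
    then have "\<mu> \<in> ess_spec (Tpert k a as bs cs)" for a
      using ess_spec_if_unimodular_zero by blast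
    then show ?thesis by (intro conjI impI exI[of _ 1]) auto
  next
    case False
    then have "\<And>z. cmod z = 1 \<Longrightarrow> det (symbol_minus k as bs cs \<mu> z) \<noteq> 0" by blast
    with decaying_eigenvector_if_winding_neg decaying_left_eigenvector_if_winding_pos
    show ?thesis by blast
  qed
qed

end
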